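(* Let $\mathcal{U}$ be a finite alphabet, $p_{UX}$ a distribution on $\mathcal{U}\times\mathcal{X}$, and consider the random code ensemble described in the context with the randomization index $K$ uniform on $\{1,\dots,2^{nR_r}\}$. If $R_r>I(X;Z|U)$, then there exists $\beta>0$ such that for all sufficiently large $n$, $$\mathbb{E}_{\mathcal{C}_n}\Big[\mathbb{V}\big(p_{MZ^n},\,p_M\,p_{Z^n}\big)\Big]\le 2^{-\beta n},$$ where the expectation is over the random codebook $\mathcal{C}_n$ and $p_{MZ^n}$ is the joint distribution of $(M,Z^n)$ induced by a given codebook.
   Context: All logarithms are base 2. $W_{YZ|X}$ is a discrete memoryless wiretap channel with finite alphabets, used memorylessly; the joint distribution of $(U,X,Y,Z)$ is $p_{UX}(u,x)W_{YZ|X}(y,z|x)$. Random code ensemble: fix rates $R_0,R,R_r>0$ and $n$. Generate $U^n(i)$, $i\in\{1,\dots,2^{nR_0}\}$, independently, each i.i.d. with law $p_U$; for each $i$, generate $X^n(i,j,k)$, $j\in\{1,\dots,2^{nR}\}$, $k\in\{1,\dots,2^{nR_r}\}$, conditionally independently with law $\prod_{t=1}^n p_{X|U}(\cdot|U_t(i))$. The indices $M_0$ and $M$ are independent and uniform on $\{1,\dots,2^{nR_0}\}$ and $\{1,\dots,2^{nR}\}$, and independent of a randomization index $K\in\{1,\dots,2^{nR_r}\}$; the transmitted word is $X^n(M_0,M,K)$ and $Z^n$ is the eavesdropper's output of $W^n$. The variational distance is $\mathbb{V}(p,q)=\sum_a|p(a)-q(a)|$. *)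

theory Defs
  imports "HOL-Probability.Probability"
begin

text \<open>Variational distance V(p,q) = sum_a |p(a) - q(a)| (unnormalised, as in the paper).\<close>
definition var_dist :: "'a pmf \<Rightarrow> 'a pmf \<Rightarrow> real" where
  "var_dist p q = (\<Sum>\<^sub>\<infinity>a. \<bar>pmf p a - pmf q a\<bar>)"

text \<open>Conditional mutual information I(X;Z|U) (base-2 logs) of a joint pmf on U x X x Z
  over finite alphabets, with the convention 0 log 0 = 0.\<close>
definition cond_mutual_info :: "('u::finite \<times> 'x::finite \<times> 'z::finite) pmf \<Rightarrow> real" where
  "cond_mutual_info P =
     (let pU  = (\<lambda>u. \<Sum>x\<in>UNIV. \<Sum>z\<in>UNIV. pmf P (u, x, z));
          pUX = (\<lambda>u x. \<Sum>z\<in>UNIV. pmf P (u, x, z));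
          pUZ = (\<lambda>u z. \<Sum>x\<in>UNIV. pmf P (u, x, z))
      in \<Sum>(u, x, z) \<in> {t. pmf P t > 0}.
           pmf P (u, x, z) * log 2 (pmf P (u, x, z) * pU u / (pUX u x * pUZ u z)))"

definition UXZ_pmf :: "('u \<times> 'x) pmf \<Rightarrow> ('x \<Rightarrow> ('y \<times> 'z) pmf) \<Rightarrow> ('u \<times> 'x \<times> 'z) pmf" where
  "UXZ_pmf pUX W = do { (u, x) \<leftarrow> pUX; (y, z) \<leftarrow> W x; return_pmf (u, x, z) }"

definition cond_X_given_U :: "('u \<times> 'x) pmf \<Rightarrow> 'u \<Rightarrow> 'x pmf" where
  "cond_X_given_U pUX u = map_pmf snd (cond_pmf pUX {p. fst p = u})"

definition num_idx :: "nat \<Rightarrow> real \<Rightarrow> nat" where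
  "num_idx n r = nat \<lceil>2 powr (real n * r)\<rceil>"

text \<open>A codebook: U-codewords indexed by (i,t) and X-codewords indexed by (i,j,k,t),
  all indices 0-based: i < 2^{nR0}, j < 2^{nR}, k < 2^{nRr}, t < n.\<close>
type_synonym ('u, 'x) codebook = "((nat \<times> nat) \<Rightarrow> 'u) \<times> ((nat \<times> nat \<times> nat \<times> nat) \<Rightarrow> 'x)"

definition codebook_pmf ::
  "('u \<times> 'x) pmf \<Rightarrow> nat \<Rightarrow> real \<Rightarrow> real \<Rightarrow> real \<Rightarrow> ('u, 'x) codebook pmf" where
  "codebook_pmf pUX n R0 R Rr =
     do { cu \<leftarrow> Pi_pmf ({..<num_idx n R0} \<times> {..<n}) undefined (\<lambda>_. map_pmf fst pUX);
          cx \<leftarrow> Pi_pmf ({..<num_idx n R0} \<times> {..<num_idx n R} \<times> {..<num_idx n Rr} \<times> {..<n}) undefined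
                  (\<lambda>(i, j, k, t). cond_X_given_U pUX (cu (i, t)));
          return_pmf (cu, cx) }"

text \<open>Joint law of (M, Z^n) induced by a fixed codebook; Z^n is represented as a function
  on {..<n} (value undefined outside).\<close>
definition MZ_pmf ::
  "('x \<Rightarrow> ('y \<times> 'z) pmf) \<Rightarrow> nat \<Rightarrow> real \<Rightarrow> real \<Rightarrow> real \<Rightarrow> ('u, 'x) codebook \<Rightarrow> (nat \<times> (nat \<Rightarrow> 'z)) pmf" where
  "MZ_pmf W n R0 R Rr C =
     do { m0 \<leftarrow> pmf_of_set {..<num_idx n R0};
          m  \<leftarrow> pmf_of_set {..<num_idx n R};
          k  \<leftarrow> pmf_of_set {..<num_idx n Rr};
          zs \<leftarrow> Pi_pmf {..<n} undefined (\<lambda>t. map_pmf snd (W (snd C (m0, m, k, t))));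
          return_pmf (m, zs) }"

end

theory Submission
  imports Defs
begin

(* For a fixed codebook the leakage is at most twice the average, over (m0,m), of the L1
   distance between the output law of the K = 2^{nRr} codewords X^n(m0,m,.) and the product
   law prod_t Q(.|U_t(m0)).  Given the cloud centre these codewords are i.i.d., so a one-shot
   soft-covering bound applies: the likelihood below a threshold T is controlled by a
   second-moment estimate (giving sqrt(T/K)), the tail by a moment of order 1+s (giving T^{-s}
   times a tilted moment).  The tilted moment single-letterises to (E_U g_s(U))^n, and
   E_U g_s(U) <= 2^{s (I(X;Z|U) + delta)} for small s > 0.  With T = 2^{n(I + 2 delta)} and
   Rr = I + 3 delta both terms decay exponentially. *)


lemma finite_set_Pi_pmf:
  assumes "finite A" "\<And>a. a \<in> A \<Longrightarrow> finite (set_pmf (p a))"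
  shows "finite (set_pmf (Pi_pmf A d p))"
  using assms by (subst set_Pi_pmf) (auto intro!: finite_PiE_dflt)

lemma var_dist_finite:
  assumes "finite S" "\<And>a. a \<notin> S \<Longrightarrow> pmf p a = 0" "\<And>a. a \<notin> S \<Longrightarrow> pmf q a = 0"
  shows "var_dist p q = (\<Sum>a\<in>S. \<bar>pmf p a - pmf q a\<bar>)"
proof -
  have "var_dist p q = infsum (\<lambda>a. \<bar>pmf p a - pmf q a\<bar>) S"
    unfolding var_dist_def using assms by (intro infsum_cong_neutral) auto
  also have "\<dots> = (\<Sum>a\<in>S. \<bar>pmf p a - pmf q a\<bar>)" using assms(1) by simp
  finally show ?thesis .
qed

lemma expectation_finite_type:
  fixes M :: "'a::finite pmf" and f :: "'a \<Rightarrow> real"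
  shows "measure_pmf.expectation M f = (\<Sum>a\<in>UNIV. pmf M a * f a)"
  by (subst integral_measure_pmf_real[of UNIV]) (auto simp: mult.commute)

lemma sum_support_pmf:
  fixes P :: "'a::finite pmf"
  shows "(\<Sum>t\<in>{t. pmf P t > 0}. pmf P t) = 1"
proof -
  have "(\<Sum>t\<in>{t. pmf P t > 0}. pmf P t) = (\<Sum>t\<in>UNIV. pmf P t)"
    by (intro sum.mono_neutral_left) (auto simp: order.strict_iff_order)
  then show ?thesis by (simp add: sum_pmf_eq_1)
qed

lemma expectation_bind_pmf_le:
  fixes f :: "'b \<Rightarrow> real"
  assumes "finite (set_pmf M)" "\<And>x. x \<in> set_pmf M \<Longrightarrow> finite (set_pmf (N x))"
    and "\<And>x. x \<in> set_pmf M \<Longrightarrow> measure_pmf.expectation (N x) f \<le> h x"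
  shows "measure_pmf.expectation (bind_pmf M N) f \<le> measure_pmf.expectation M h"
proof -
  have "measure_pmf.expectation (bind_pmf M N) f
      = (\<Sum>a\<in>set_pmf M. pmf M a * measure_pmf.expectation (N a) f)"
    using assms by (subst pmf_expectation_bind[of "set_pmf M"]) auto
  also have "\<dots> \<le> (\<Sum>a\<in>set_pmf M. pmf M a * h a)"
    using assms by (intro sum_mono mult_left_mono) auto
  also have "\<dots> = measure_pmf.expectation M h"
    using assms by (subst integral_measure_pmf_real[of "set_pmf M"]) (auto simp: mult.commute)
  finally show ?thesis .
qed

lemma expectation_abs_le_sqrt_second_moment:
  fixes Z :: "'a \<Rightarrow> real"
  assumes fin: "finite (set_pmf M)"
  shows "measure_pmf.expectation M (\<lambda>x. \<bar>Z x\<bar>) \<le> sqrt (measure_pmf.expectation M (\<lambda>x. (Z x)\<^sup>2))"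
proof -
  define c where "c = measure_pmf.expectation M (\<lambda>x. \<bar>Z x\<bar>)"
  have c0: "c \<ge> 0" unfolding c_def by simp
  have "0 \<le> measure_pmf.expectation M (\<lambda>x. (\<bar>Z x\<bar> - c)\<^sup>2)" by simp
  also have "(\<lambda>x. (\<bar>Z x\<bar> - c)\<^sup>2) = (\<lambda>x. ((Z x)\<^sup>2 - 2 * c * \<bar>Z x\<bar>) + c\<^sup>2)"
    by (auto simp: power2_eq_square algebra_simps abs_mult_self_eq)
  also have "measure_pmf.expectation M \<dots> = measure_pmf.expectation M (\<lambda>x. (Z x)\<^sup>2) - 2 * c * c + c\<^sup>2"
    using fin by (simp add: integrable_measure_pmf_finite c_def)
  finally have "c\<^sup>2 \<le> measure_pmf.expectation M (\<lambda>x. (Z x)\<^sup>2)"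
    by (simp add: power2_eq_square)
  then show ?thesis unfolding c_def[symmetric] using c0 real_le_rsqrt by blast
qed

lemma pmf_Pi_lessThan:
  fixes n :: nat
  assumes "zs \<in> PiE {..<n} (\<lambda>_. UNIV)"
  shows "pmf (Pi_pmf {..<n} undefined F) zs = (\<Prod>t<n. pmf (F t) (zs t))"
  using assms by (subst pmf_Pi') (auto simp: PiE_def extensional_def)

lemma pmf_Pi_lessThan_outside:
  fixes n :: nat
  assumes "zs \<notin> PiE {..<n} (\<lambda>_. UNIV)"
  shows "pmf (Pi_pmf {..<n} undefined F) zs = 0"
  using assms by (intro pmf_Pi_outside) (auto simp: PiE_def extensional_def)

lemma Pi_pmf_reindex_image:
  assumes "finite B" "inj g"
  shows "map_pmf (\<lambda>x. x \<circ> g) (Pi_pmf (g ` B) d F) = Pi_pmf B d (F \<circ> g)"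
  using assms(1)
proof (induction rule: finite_induct)
  case empty
  then show ?case by (simp add: o_def)
next
  case (insert b B)
  have nb: "g b \<notin> g ` B" using insert.hyps assms(2) by (auto dest: injD)
  have "map_pmf (\<lambda>x. x \<circ> g) (Pi_pmf (g ` insert b B) d F)
      = map_pmf (\<lambda>x. x \<circ> g) (map_pmf (\<lambda>(y, f). f(g b := y)) (pair_pmf (F (g b)) (Pi_pmf (g ` B) d F)))"
    using nb insert.hyps by (simp add: Pi_pmf_insert)
  also have "\<dots> = map_pmf (\<lambda>(y, f). f(b := y))
                    (map_pmf (\<lambda>(y,f). (y, f \<circ> g)) (pair_pmf (F (g b)) (Pi_pmf (g ` B) d F)))"
    unfolding pmf.map_comp
  proof (intro pmf.map_cong refl)
    fix z assume "z \<in> set_pmf (pair_pmf (F (g b)) (Pi_pmf (g ` B) d F))"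
    show "((\<lambda>x. x \<circ> g) \<circ> (\<lambda>(y, f). f(g b := y))) z = ((\<lambda>(y, f). f(b := y)) \<circ> (\<lambda>(y, f). (y, f \<circ> g))) z"
      using assms(2) by (cases z) (auto simp: fun_eq_iff dest: injD)
  qed
  also have "map_pmf (\<lambda>(y,f). (y, f \<circ> g)) (pair_pmf (F (g b)) (Pi_pmf (g ` B) d F))
      = pair_pmf (F (g b)) (map_pmf (\<lambda>x. x \<circ> g) (Pi_pmf (g ` B) d F))"
    unfolding pair_map_pmf2 by (intro pmf.map_cong) (auto simp: apsnd_def)
  also have "\<dots> = pair_pmf ((F \<circ> g) b) (Pi_pmf B d (F \<circ> g))"
    using insert.IH by (metis comp_apply)
  also have "map_pmf (\<lambda>(y, f). f(b := y)) \<dots> = Pi_pmf (insert b B) d (F \<circ> g)"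
    using insert.hyps by (simp add: Pi_pmf_insert)
  finally show ?case .
qed

lemma Pi_pmf_reindex:
  assumes "finite A" "finite B" "inj g" "\<And>b. g b \<in> A \<longleftrightarrow> b \<in> B"
  shows "map_pmf (\<lambda>x. x \<circ> g) (Pi_pmf A d F) = Pi_pmf B d (F \<circ> g)"
proof -
  have sub: "g ` B \<subseteq> A" by (auto simp: assms(4))
  have "Pi_pmf B d (F \<circ> g) = map_pmf (\<lambda>x. x \<circ> g) (Pi_pmf (g ` B) d F)"
    by (rule Pi_pmf_reindex_image[OF assms(2,3), symmetric])
  also have "\<dots> = map_pmf (\<lambda>x. x \<circ> g) (map_pmf (\<lambda>f x. if x \<in> g ` B then f x else d) (Pi_pmf A d F))"
    by (subst Pi_pmf_subset[OF assms(1) sub]) (rule refl)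
  also have "\<dots> = map_pmf (\<lambda>x. x \<circ> g) (Pi_pmf A d F)"
    unfolding pmf.map_comp
  proof (intro pmf.map_cong refl ext)
    fix x b assume x: "x \<in> set_pmf (Pi_pmf A d F)"
    then have xd: "\<And>a. a \<notin> A \<Longrightarrow> x a = d" using set_Pi_pmf_subset[OF assms(1), of d F] by auto
    have "g b \<notin> A" if "b \<notin> B" using that assms(4)[of b] by simp
    moreover have "g b \<notin> g ` B" if "b \<notin> B" using that assms(3) by (simp add: inj_image_mem_iff)
    ultimately show "((\<lambda>x. x \<circ> g) \<circ> (\<lambda>f x. if x \<in> g ` B then f x else d)) x b = (x \<circ> g) b"
      using xd by (cases "b \<in> B") auto
  qed
  finally show ?thesis ..
qed

lemma Pi_pmf_curry:
  assumes "finite B1" "finite B2"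
  shows "map_pmf (\<lambda>x k t. x (k, t)) (Pi_pmf (B1 \<times> B2) d F)
       = Pi_pmf B1 (\<lambda>_. d) (\<lambda>k. Pi_pmf B2 d (\<lambda>t. F (k, t)))"
proof (rule pmf_eqI)
  fix y :: "'a \<Rightarrow> 'b \<Rightarrow> 'c"
  have inj: "inj (\<lambda>x k t. x (k, t))"
    by (intro injI) (auto simp: fun_eq_iff)
  have y: "y = (\<lambda>k t. (case_prod y) (k, t))" by simp
  have "pmf (map_pmf (\<lambda>x k t. x (k, t)) (Pi_pmf (B1 \<times> B2) d F)) y
      = pmf (Pi_pmf (B1 \<times> B2) d F) (case_prod y)"
    by (subst y, subst pmf_map_inj'[OF inj]) simp
  also have "\<dots> = pmf (Pi_pmf B1 (\<lambda>_. d) (\<lambda>k. Pi_pmf B2 d (\<lambda>t. F (k, t)))) y"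
  proof (cases "\<forall>k t. (k, t) \<notin> B1 \<times> B2 \<longrightarrow> y k t = d")
    case True
    then have o1: "\<forall>k. k \<notin> B1 \<longrightarrow> y k = (\<lambda>_. d)" by auto
    have "pmf (Pi_pmf (B1 \<times> B2) d F) (case_prod y) = (\<Prod>p\<in>B1 \<times> B2. pmf (F p) (case_prod y p))"
      using True assms by (subst pmf_Pi) auto
    also have "\<dots> = (\<Prod>k\<in>B1. \<Prod>t\<in>B2. pmf (F (k, t)) (y k t))"
      by (subst prod.cartesian_product) (simp add: case_prod_beta')
    also have "\<dots> = (\<Prod>k\<in>B1. pmf (Pi_pmf B2 d (\<lambda>t. F (k, t))) (y k))"
      using True assms by (intro prod.cong refl, subst pmf_Pi) auto
    also have "\<dots> = pmf (Pi_pmf B1 (\<lambda>_. d) (\<lambda>k. Pi_pmf B2 d (\<lambda>t. F (k, t)))) y"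
      using o1 assms by (subst pmf_Pi) auto
    finally show ?thesis .
  next
    case False
    then obtain k t where kt: "(k, t) \<notin> B1 \<times> B2" "y k t \<noteq> d" by auto
    have l: "pmf (Pi_pmf (B1 \<times> B2) d F) (case_prod y) = 0"
      using kt assms by (intro pmf_Pi_outside) auto
    show ?thesis
    proof (cases "k \<in> B1")
      case True
      then have "pmf (Pi_pmf B2 d (\<lambda>t. F (k, t))) (y k) = 0"
        using kt assms by (intro pmf_Pi_outside) auto
      then have "(\<Prod>k\<in>B1. pmf (Pi_pmf B2 d (\<lambda>t. F (k, t))) (y k)) = 0"
        using True assms by (intro prod_zero) auto
      then show ?thesis using l assms by (subst pmf_Pi) auto
    next
      case False
      then have "pmf (Pi_pmf B1 (\<lambda>_. d) (\<lambda>k. Pi_pmf B2 d (\<lambda>t. F (k, t)))) y = 0"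
        using kt assms by (intro pmf_Pi_outside) (auto simp: fun_eq_iff)
      then show ?thesis using l by simp
    qed
  qed
  finally show "pmf (map_pmf (\<lambda>x k t. x (k, t)) (Pi_pmf (B1 \<times> B2) d F)) y
              = pmf (Pi_pmf B1 (\<lambda>_. d) (\<lambda>k. Pi_pmf B2 d (\<lambda>t. F (k, t)))) y" .
qed


subsection \<open>One-shot soft covering for i.i.d. samples\<close>

lemma expectation_iid_component:
  fixes k K :: nat
  assumes "k < K"
  shows "measure_pmf.expectation (Pi_pmf {..<K} d (\<lambda>_. \<nu>)) (\<lambda>x. f (x k))
       = measure_pmf.expectation \<nu> (f :: _ \<Rightarrow> real)"
proof -
  have "map_pmf (\<lambda>x. x k) (Pi_pmf {..<K} d (\<lambda>_. \<nu>)) = \<nu>"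
    using assms by (subst Pi_pmf_component) auto
  then show ?thesis by (metis integral_map_pmf)
qed

lemma expectation_iid_two_components:
  fixes f g :: "'a \<Rightarrow> real" and k k' K :: nat
  assumes fin: "finite (set_pmf \<nu>)" and kk: "k < K" "k' < K" "k \<noteq> k'"
    and f: "\<And>a. f a \<ge> 0" and g: "\<And>a. g a \<ge> 0"
  shows "measure_pmf.expectation (Pi_pmf {..<K} d (\<lambda>_. \<nu>)) (\<lambda>x. f (x k) * g (x k'))
       = measure_pmf.expectation \<nu> f * measure_pmf.expectation \<nu> g"
proof -
  define F where "F = (\<lambda>i. if i = k then f else g)"
  have sub: "{k, k'} \<subseteq> {..<K}" using kk by auto
  have "measure_pmf.expectation (Pi_pmf {k, k'} d (\<lambda>_. \<nu>)) (\<lambda>y. \<Prod>i\<in>{k,k'}. F i (y i))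
      = (\<Prod>i\<in>{k,k'}. measure_pmf.expectation \<nu> (F i))"
    by (rule expectation_prod_Pi_pmf) (auto simp: integrable_measure_pmf_finite fin F_def f g)
  also have "\<dots> = measure_pmf.expectation \<nu> f * measure_pmf.expectation \<nu> g"
    using kk by (simp add: F_def)
  also have "(\<lambda>y. \<Prod>i\<in>{k,k'}. F i (y i)) = (\<lambda>y. f (y k) * g (y k'))"
    using kk by (auto simp: F_def)
  also have "measure_pmf.expectation (Pi_pmf {k, k'} d (\<lambda>_. \<nu>)) (\<lambda>y. f (y k) * g (y k'))
     = measure_pmf.expectation (Pi_pmf {..<K} d (\<lambda>_. \<nu>)) (\<lambda>x. f (x k) * g (x k'))"
    by (subst Pi_pmf_subset[OF _ sub]) auto
  finally show ?thesis by simp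
qed

lemma iid_empirical_mean_variance:
  fixes G :: "'a \<Rightarrow> real" and K :: nat
  assumes fin: "finite (set_pmf \<nu>)" and K: "K > 0" and G0: "\<And>a. G a \<ge> 0"
  shows "measure_pmf.expectation (Pi_pmf {..<K} d (\<lambda>_. \<nu>))
           (\<lambda>x. ((\<Sum>k<K. G (x k)) / K - measure_pmf.expectation \<nu> G)\<^sup>2)
         \<le> measure_pmf.expectation \<nu> (\<lambda>a. (G a)\<^sup>2) / K"
proof -
  define R where "R = Pi_pmf {..<K} d (\<lambda>_. \<nu>)"
  define m where "m = measure_pmf.expectation \<nu> G"
  define EG2 where "EG2 = measure_pmf.expectation \<nu> (\<lambda>a. (G a)\<^sup>2)"
  define SG where "SG = (\<lambda>x. \<Sum>k<K. G (x k))"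
  have finR: "finite (set_pmf R)" unfolding R_def by (rule finite_set_Pi_pmf) (auto simp: fin)
  have K0: "real K > 0" using K by simp
  have pair: "measure_pmf.expectation R (\<lambda>x. G (x k) * G (x k')) = m\<^sup>2 + (if k = k' then EG2 - m\<^sup>2 else 0)"
    if "k < K" "k' < K" for k k'
  proof (cases "k = k'")
    case True
    then show ?thesis using that expectation_iid_component[of k K d \<nu> "\<lambda>a. G a * G a"]
      by (simp add: R_def EG2_def power2_eq_square)
  next
    case False
    then show ?thesis unfolding R_def m_def using that
      by (simp add: power2_eq_square expectation_iid_two_components fin G0)
  qed
  have ESG2: "measure_pmf.expectation R (\<lambda>x. (SG x)\<^sup>2) = K^2 * m\<^sup>2 + K * (EG2 - m\<^sup>2)"
  proof -
    have "measure_pmf.expectation R (\<lambda>x. (SG x)\<^sup>2)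
        = (\<Sum>k<K. \<Sum>k'<K. measure_pmf.expectation R (\<lambda>x. G (x k) * G (x k')))"
      by (simp add: SG_def power2_eq_square sum_product integrable_measure_pmf_finite finR)
    also have "\<dots> = (\<Sum>k<K. \<Sum>k'<K. m\<^sup>2 + (if k = k' then EG2 - m\<^sup>2 else 0))"
      by (intro sum.cong refl pair) auto
    also have "\<dots> = K^2 * m\<^sup>2 + K * (EG2 - m\<^sup>2)"
      by (simp add: sum.distrib power2_eq_square algebra_simps)
    finally show ?thesis .
  qed
  have ESG: "measure_pmf.expectation R SG = K * m"
  proof -
    have "measure_pmf.expectation R SG = (\<Sum>k<K. measure_pmf.expectation R (\<lambda>x. G (x k)))"
      unfolding SG_def by (simp add: integrable_measure_pmf_finite finR)
    also have "\<dots> = (\<Sum>k<K. m)"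
      unfolding R_def m_def by (intro sum.cong refl expectation_iid_component) auto
    finally show ?thesis by simp
  qed
  have expand: "(SG x / K - m)\<^sup>2 = ((SG x)\<^sup>2 - 2 * (K * m) * SG x + (K * m)\<^sup>2) / (K^2)" for x
    using K0 by (simp add: field_simps power2_eq_square)
  have "measure_pmf.expectation R (\<lambda>x. (SG x / K - m)\<^sup>2)
      = (measure_pmf.expectation R (\<lambda>x. (SG x)\<^sup>2) - 2 * (K * m) * measure_pmf.expectation R SG
          + (K * m)\<^sup>2) / K^2"
    unfolding expand by (simp add: integrable_measure_pmf_finite finR)
  also have "\<dots> = (EG2 - m\<^sup>2) / K"
    unfolding ESG2 ESG using K0 by (simp add: power2_eq_square field_simps)
  also have "\<dots> \<le> EG2 / K" using K0 by (simp add: divide_right_mono)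
  finally show ?thesis unfolding R_def m_def EG2_def SG_def .
qed

lemma iid_empirical_mean_abs_dev:
  fixes G :: "'a \<Rightarrow> real" and K :: nat
  assumes fin: "finite (set_pmf \<nu>)" and K: "K > 0" and G0: "\<And>a. G a \<ge> 0" and Gc: "\<And>a. G a \<le> c"
  shows "measure_pmf.expectation (Pi_pmf {..<K} d (\<lambda>_. \<nu>))
           (\<lambda>x. \<bar>(\<Sum>k<K. G (x k)) / K - measure_pmf.expectation \<nu> G\<bar>)
         \<le> sqrt (c * measure_pmf.expectation \<nu> G / K)"
proof -
  have "measure_pmf.expectation \<nu> (\<lambda>a. (G a)\<^sup>2) \<le> measure_pmf.expectation \<nu> (\<lambda>a. c * G a)"
    using Gc G0 by (intro integral_mono)
      (auto simp: integrable_measure_pmf_finite fin power2_eq_square mult_right_mono)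
  then have second_moment: "measure_pmf.expectation \<nu> (\<lambda>a. (G a)\<^sup>2) \<le> c * measure_pmf.expectation \<nu> G"
    by simp
  have "measure_pmf.expectation (Pi_pmf {..<K} d (\<lambda>_. \<nu>))
           (\<lambda>x. \<bar>(\<Sum>k<K. G (x k)) / K - measure_pmf.expectation \<nu> G\<bar>)
      \<le> sqrt (measure_pmf.expectation (Pi_pmf {..<K} d (\<lambda>_. \<nu>))
           (\<lambda>x. ((\<Sum>k<K. G (x k)) / K - measure_pmf.expectation \<nu> G)\<^sup>2))"
    using fin by (intro expectation_abs_le_sqrt_second_moment finite_set_Pi_pmf) auto
  also have "\<dots> \<le> sqrt (measure_pmf.expectation \<nu> (\<lambda>a. (G a)\<^sup>2) / K)"
    using iid_empirical_mean_variance[OF fin K G0] by simp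
  also have "\<dots> \<le> sqrt (c * measure_pmf.expectation \<nu> G / K)"
    using second_moment by (simp add: divide_right_mono)
  finally show ?thesis .
qed

lemma tail_expectation_le_moment:
  fixes \<nu> :: "'a pmf" and Y :: "'a \<Rightarrow> real"
  assumes fin: "finite (set_pmf \<nu>)" and Y: "\<And>a. Y a \<ge> 0" and T: "T > 0" and s: "s \<ge> 0"
  shows "measure_pmf.expectation \<nu> (\<lambda>a. if Y a > T * measure_pmf.expectation \<nu> Y then Y a else 0)
       \<le> T powr (-s) * (measure_pmf.expectation \<nu> Y) powr (-s)
           * measure_pmf.expectation \<nu> (\<lambda>a. Y a powr (1 + s))"
proof -
  define q where "q = measure_pmf.expectation \<nu> Y"
  have q0: "q \<ge> 0" unfolding q_def by (auto intro!: integral_nonneg simp: Y)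
  show ?thesis
  proof (cases "q = 0")
    case True
    have "measure_pmf.expectation \<nu> (\<lambda>a. if Y a > T * q then Y a else 0) \<le> measure_pmf.expectation \<nu> Y"
      by (rule integral_mono) (auto simp: integrable_measure_pmf_finite fin Y)
    then show ?thesis using True unfolding q_def[symmetric] by simp
  next
    case False
    then have Tq: "T * q > 0" using q0 T by simp
    have pointwise: "(if Y a > T * q then Y a else 0) \<le> (T * q) powr (-s) * Y a powr (1 + s)" for a
    proof (cases "Y a > T * q")
      case True
      have "(T * q) powr s \<le> Y a powr s" using True Tq s by (intro powr_mono2) auto
      moreover have "(T * q) powr s > 0" using Tq by auto
      ultimately have "1 \<le> Y a powr s / (T * q) powr s" by (subst le_divide_eq_1_pos) auto
      then have "1 \<le> (T * q) powr (-s) * Y a powr s"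
        by (simp add: powr_minus divide_inverse mult.commute)
      then have "Y a * 1 \<le> Y a * ((T * q) powr (-s) * Y a powr s)"
        using Y[of a] by (intro mult_left_mono) auto
      also have "\<dots> = (T * q) powr (-s) * Y a powr (1 + s)"
        using Y[of a] by (simp add: powr_mult_base[symmetric])
      finally show ?thesis using True by simp
    qed simp
    have "measure_pmf.expectation \<nu> (\<lambda>a. if Y a > T * q then Y a else 0)
        \<le> measure_pmf.expectation \<nu> (\<lambda>a. (T * q) powr (-s) * Y a powr (1 + s))"
      by (rule integral_mono) (auto simp: integrable_measure_pmf_finite fin pointwise)
    also have "\<dots> = T powr (-s) * q powr (-s) * measure_pmf.expectation \<nu> (\<lambda>a. Y a powr (1 + s))"
      by (simp add: powr_mult)
    finally show ?thesis unfolding q_def .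
  qed
qed

text \<open>Truncate \<open>Y\<close> at the threshold; the bounded part is handled by the variance
  bound, the tail by its mean.\<close>
lemma soft_covering_iid:
  fixes \<nu> :: "'a pmf" and Y :: "'a \<Rightarrow> real" and T :: real and K :: nat
  assumes fin: "finite (set_pmf \<nu>)" and K: "K > 0" and Y: "\<And>a. Y a \<ge> 0" and T: "T > 0"
  shows "measure_pmf.expectation (Pi_pmf {..<K} d (\<lambda>_. \<nu>))
           (\<lambda>x. \<bar>(\<Sum>k<K. Y (x k)) / K - measure_pmf.expectation \<nu> Y\<bar>)
         \<le> measure_pmf.expectation \<nu> Y * sqrt (T / K)
            + 2 * measure_pmf.expectation \<nu> (\<lambda>a. if Y a > T * measure_pmf.expectation \<nu> Y then Y a else 0)"
proof -
  define q where "q = measure_pmf.expectation \<nu> Y"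
  define R where "R = Pi_pmf {..<K} d (\<lambda>_. \<nu>)"
  have finR: "finite (set_pmf R)" unfolding R_def by (rule finite_set_Pi_pmf) (auto simp: fin)
  define G where "G = (\<lambda>a. if Y a > T * q then 0 else Y a)"
  define H where "H = (\<lambda>a. if Y a > T * q then Y a else 0)"
  have G0: "\<And>a. G a \<ge> 0" and H0: "\<And>a. H a \<ge> 0" by (auto simp: G_def H_def Y)
  have q0: "q \<ge> 0" unfolding q_def by (auto intro!: integral_nonneg simp: Y)
  have GT: "\<And>a. G a \<le> T * q" using q0 T by (auto simp: G_def)
  define m where "m = measure_pmf.expectation \<nu> G"
  define h where "h = measure_pmf.expectation \<nu> H"
  have "Y = (\<lambda>a. G a + H a)" by (auto simp: G_def H_def)
  then have qmh: "q = m + h" unfolding q_def m_def h_def by (simp add: integrable_measure_pmf_finite fin)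
  have h0: "h \<ge> 0" unfolding h_def by (auto intro!: integral_nonneg simp: H0)
  define SG where "SG = (\<lambda>x. \<Sum>k<K. G (x k))"
  define SH where "SH = (\<lambda>x. \<Sum>k<K. H (x k))"
  have K0: "real K > 0" using K by simp
  have split: "\<bar>(\<Sum>k<K. Y (x k)) / K - q\<bar> \<le> \<bar>SG x / K - m\<bar> + SH x / K + h" for x
  proof -
    have "(\<Sum>k<K. Y (x k)) / K - q = (SG x / K - m) + (SH x / K - h)"
      using qmh \<open>Y = _\<close> by (simp add: SG_def SH_def sum.distrib add_divide_distrib)
    moreover have "SH x / K \<ge> 0" unfolding SH_def by (simp add: sum_nonneg H0)
    ultimately show ?thesis using h0 by linarith
  qed
  have ESH: "measure_pmf.expectation R (\<lambda>x. SH x / K) = h"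
  proof -
    have "measure_pmf.expectation R SH = (\<Sum>k<K. measure_pmf.expectation R (\<lambda>x. H (x k)))"
      unfolding SH_def by (simp add: integrable_measure_pmf_finite finR)
    also have "\<dots> = (\<Sum>k<K. h)"
      unfolding R_def h_def by (intro sum.cong refl expectation_iid_component) auto
    finally show ?thesis using K0 by simp
  qed
  \<comment> \<open>the truncated part is bounded by \<open>T q\<close> and has mean \<open>m \<le> q\<close>\<close>
  have "measure_pmf.expectation R (\<lambda>x. \<bar>SG x / K - m\<bar>) \<le> sqrt (T * q * m / K)"
    unfolding R_def SG_def m_def by (rule iid_empirical_mean_abs_dev[OF fin K G0 GT])
  also have "\<dots> \<le> sqrt (T * q * q / K)"
    using T q0 qmh h0 K0 by (intro real_sqrt_le_mono divide_right_mono mult_left_mono) auto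
  also have "\<dots> = q * sqrt (T / K)" using q0 by (simp add: real_sqrt_mult real_sqrt_divide)
  finally have bounded_part: "measure_pmf.expectation R (\<lambda>x. \<bar>SG x / K - m\<bar>) \<le> q * sqrt (T / K)" .
  have "measure_pmf.expectation R (\<lambda>x. \<bar>(\<Sum>k<K. Y (x k)) / K - q\<bar>)
      \<le> measure_pmf.expectation R (\<lambda>x. \<bar>SG x / K - m\<bar> + SH x / K + h)"
    by (rule integral_mono) (auto simp: integrable_measure_pmf_finite finR split)
  also have "\<dots> = measure_pmf.expectation R (\<lambda>x. \<bar>SG x / K - m\<bar>) + h + h"
    using ESH by (simp add: integrable_measure_pmf_finite finR)
  finally show ?thesis using bounded_part unfolding R_def q_def h_def H_def by simp
qed


subsection \<open>Soft covering through a memoryless channel\<close>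

text \<open>The tail term
  factorises over the coordinates.\<close>
lemma soft_covering_product_point:
  fixes \<mu> :: "nat \<Rightarrow> 'x::finite pmf" and V :: "'x \<Rightarrow> 'z pmf" and K n :: nat and T s :: real
  assumes K: "K > 0" and T: "T > 0" and s: "s \<ge> 0"
  shows "measure_pmf.expectation (Pi_pmf {..<K} dd (\<lambda>_. Pi_pmf {..<n} undefined \<mu>))
           (\<lambda>x. \<bar>(\<Sum>k<K. \<Prod>t<n. pmf (V (x k t)) (zs t)) / K - (\<Prod>t<n. pmf (bind_pmf (\<mu> t) V) (zs t))\<bar>)
         \<le> (\<Prod>t<n. pmf (bind_pmf (\<mu> t) V) (zs t)) * sqrt (T / K) + 2 * T powr (-s) *
             (\<Prod>t<n. pmf (bind_pmf (\<mu> t) V) (zs t) powr (-s)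
                        * measure_pmf.expectation (\<mu> t) (\<lambda>x. pmf (V x) (zs t) powr (1 + s)))"
proof -
  define \<nu> where "\<nu> = Pi_pmf {..<n} undefined \<mu>"
  have fin: "finite (set_pmf \<nu>)" unfolding \<nu>_def by (rule finite_set_Pi_pmf) auto
  define Y where "Y = (\<lambda>v :: nat \<Rightarrow> 'x. \<Prod>t<n. pmf (V (v t)) (zs t))"
  have Y0: "\<And>v. Y v \<ge> 0" unfolding Y_def by (simp add: prod_nonneg)
  have EY: "measure_pmf.expectation \<nu> Y = (\<Prod>t<n. pmf (bind_pmf (\<mu> t) V) (zs t))"
    unfolding \<nu>_def Y_def
    by (subst expectation_prod_Pi_pmf) (auto simp: integrable_measure_pmf_finite pmf_bind)
  have moment: "measure_pmf.expectation \<nu> (\<lambda>v. Y v powr (1 + s))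
      = (\<Prod>t<n. measure_pmf.expectation (\<mu> t) (\<lambda>x. pmf (V x) (zs t) powr (1 + s)))"
  proof -
    have "measure_pmf.expectation \<nu> (\<lambda>v. Y v powr (1 + s))
        = measure_pmf.expectation \<nu> (\<lambda>v. \<Prod>t<n. pmf (V (v t)) (zs t) powr (1 + s))"
      unfolding Y_def by (simp add: prod_powr_distrib)
    also have "\<dots> = (\<Prod>t<n. measure_pmf.expectation (\<mu> t) (\<lambda>x. pmf (V x) (zs t) powr (1 + s)))"
      unfolding \<nu>_def by (rule expectation_prod_Pi_pmf) (auto simp: integrable_measure_pmf_finite)
    finally show ?thesis .
  qed
  have "measure_pmf.expectation (Pi_pmf {..<K} dd (\<lambda>_. \<nu>)) (\<lambda>x. \<bar>(\<Sum>k<K. Y (x k)) / K - measure_pmf.expectation \<nu> Y\<bar>)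
      \<le> measure_pmf.expectation \<nu> Y * sqrt (T / K)
         + 2 * (T powr (-s) * (measure_pmf.expectation \<nu> Y) powr (-s)
                * measure_pmf.expectation \<nu> (\<lambda>v. Y v powr (1 + s)))"
    using soft_covering_iid[of \<nu> K Y T dd, OF fin K Y0 T] tail_expectation_le_moment[of \<nu> Y T s, OF fin Y0 T s]
    by (simp add: mult.assoc)
  then show ?thesis
    unfolding EY moment unfolding Y_def \<nu>_def
    by (simp add: prod_powr_distrib prod.distrib mult.assoc)
qed

lemma soft_covering_product:
  fixes \<mu> :: "nat \<Rightarrow> 'x::finite pmf" and V :: "'x \<Rightarrow> 'z::finite pmf" and K n :: nat and T s :: real
  assumes K: "K > 0" and T: "T > 0" and s: "s \<ge> 0"
  shows "measure_pmf.expectation (Pi_pmf {..<K} dd (\<lambda>_. Pi_pmf {..<n} undefined \<mu>))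
           (\<lambda>x. \<Sum>zs\<in>PiE {..<n} (\<lambda>_. UNIV).
                \<bar>(\<Sum>k<K. pmf (Pi_pmf {..<n} undefined (\<lambda>t. V (x k t))) zs) / K
                 - pmf (Pi_pmf {..<n} undefined (\<lambda>t. bind_pmf (\<mu> t) V)) zs\<bar>)
         \<le> sqrt (T / K) + 2 * T powr (-s) *
             (\<Prod>t<n. \<Sum>z\<in>UNIV. pmf (bind_pmf (\<mu> t) V) z powr (-s)
                        * measure_pmf.expectation (\<mu> t) (\<lambda>x. pmf (V x) z powr (1 + s)))"
proof -
  define \<Omega> where "\<Omega> = PiE {..<n} (\<lambda>_. UNIV :: 'z set)"
  define R where "R = Pi_pmf {..<K} dd (\<lambda>_. Pi_pmf {..<n} undefined \<mu>)"
  have finR: "finite (set_pmf R)" unfolding R_def by (intro finite_set_Pi_pmf) auto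
  define Q where "Q = (\<lambda>t. bind_pmf (\<mu> t) V)"
  define c where "c = (\<lambda>t z. pmf (Q t) z powr (-s) * measure_pmf.expectation (\<mu> t) (\<lambda>x. pmf (V x) z powr (1 + s)))"
  have sum_PiE: "(\<Sum>zs\<in>\<Omega>. \<Prod>t<n. g t (zs t)) = (\<Prod>t<n. \<Sum>z\<in>UNIV. g t z)" for g :: "nat \<Rightarrow> 'z \<Rightarrow> real"
    unfolding \<Omega>_def by (subst prod_sum_PiE) auto
  have mass_one: "(\<Sum>zs\<in>\<Omega>. \<Prod>t<n. pmf (Q t) (zs t)) = 1"
    using sum_PiE[of "\<lambda>t z. pmf (Q t) z"] by (simp add: sum_pmf_eq_1)
  have "measure_pmf.expectation R
        (\<lambda>x. \<Sum>zs\<in>\<Omega>. \<bar>(\<Sum>k<K. pmf (Pi_pmf {..<n} undefined (\<lambda>t. V (x k t))) zs) / K - pmf (Pi_pmf {..<n} undefined Q) zs\<bar>)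
      = (\<Sum>zs\<in>\<Omega>. measure_pmf.expectation R
        (\<lambda>x. \<bar>(\<Sum>k<K. \<Prod>t<n. pmf (V (x k t)) (zs t)) / K - (\<Prod>t<n. pmf (Q t) (zs t))\<bar>))"
    unfolding \<Omega>_def by (simp add: integrable_measure_pmf_finite finR pmf_Pi_lessThan finite_PiE cong: sum.cong)
  also have "\<dots> \<le> (\<Sum>zs\<in>\<Omega>. (\<Prod>t<n. pmf (Q t) (zs t)) * sqrt (T / K) + 2 * T powr (-s) * (\<Prod>t<n. c t (zs t)))"
    unfolding R_def Q_def c_def by (rule sum_mono) (rule soft_covering_product_point[OF K T s])
  also have "\<dots> = sqrt (T / K) + 2 * T powr (-s) * (\<Prod>t<n. \<Sum>z\<in>UNIV. c t z)"
    unfolding sum.distrib sum_distrib_left[symmetric] sum_distrib_right[symmetric] mass_one sum_PiE by simp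
  finally show ?thesis unfolding R_def Q_def c_def \<Omega>_def .
qed


subsection \<open>The small-\<open>s\<close> exponent bound\<close>

lemma exp_le_quadratic:
  fixes y :: real
  assumes "\<bar>y\<bar> \<le> 1"
  shows "exp y \<le> 1 + y + y\<^sup>2"
proof (cases "y \<ge> 0")
  case True
  then show ?thesis using exp_bound[of y] assms by simp
next
  case False
  define a where "a = - y"
  have a: "0 \<le> a" "a \<le> 1" using False assms by (auto simp: a_def)
  have e: "exp (-y) \<ge> (2 + 2*a + a\<^sup>2) / 2" using exp_lower_Taylor_quadratic[of a] a by (simp add: a_def)
  have pos: "2 + 2*a + a\<^sup>2 > 0" using a by (simp add: add_pos_nonneg)
  have "(1 - a + a\<^sup>2) * (2 + 2*a + a\<^sup>2) = 2 + a\<^sup>2 + a^3 + a^4"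
    by (simp add: power2_eq_square power3_eq_cube power4_eq_xxxx algebra_simps)
  moreover have "a^3 \<ge> 0" "a^4 \<ge> 0" "a\<^sup>2 \<ge> 0" using a by auto
  ultimately have "(1 - a + a\<^sup>2) * (2 + 2*a + a\<^sup>2) \<ge> 2" by linarith
  then have "2 / (2 + 2*a + a\<^sup>2) \<le> 1 - a + a\<^sup>2"
    using pos by (simp add: divide_le_eq)
  moreover have "exp y = 1 / exp (-y)" by (simp add: exp_minus inverse_eq_divide)
  moreover have "1 / exp (-y) \<le> 1 / ((2 + 2*a + a\<^sup>2) / 2)"
    using e pos by (intro divide_left_mono) auto
  ultimately show ?thesis by (simp add: a_def)
qed

lemma powr_le_second_order:
  fixes r s :: real
  assumes "r > 0" and "\<bar>s * ln r\<bar> \<le> 1"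
  shows "r powr s \<le> 1 + s * ln r + (s * ln r)\<^sup>2"
  using exp_le_quadratic[OF assms(2)] assms(1) by (simp add: powr_def mult.commute)

text \<open>For weights \<open>w\<close> summing to one and positive ratios \<open>r\<close>, the moment \<open>\<Sum> w r\<^sup>s\<close> is at most
  \<open>2^(s (\<Sum> w log r + \<delta>))\<close> for some small \<open>s > 0\<close>: at \<open>s = 0\<close> the exponent \<open>log (\<Sum> w r\<^sup>s)\<close>
  vanishes and has derivative \<open>\<Sum> w log r\<close>.\<close>
lemma weighted_powr_exponent_bound:
  fixes S :: "'a set" and w r :: "'a \<Rightarrow> real" and \<delta> :: real
  assumes fin: "finite S" and w: "\<And>t. t \<in> S \<Longrightarrow> w t > 0" and r: "\<And>t. t \<in> S \<Longrightarrow> r t > 0"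
    and sw: "(\<Sum>t\<in>S. w t) = 1" and d: "\<delta> > 0"
  shows "\<exists>s>0. s \<le> 1 \<and> (\<Sum>t\<in>S. w t * r t powr s) \<le> 2 powr (s * ((\<Sum>t\<in>S. w t * log 2 (r t)) + \<delta>))"
proof -
  define J where "J = (\<Sum>t\<in>S. w t * ln (r t))"
  define a where "a = (\<Sum>t\<in>S. \<bar>ln (r t)\<bar>) + 1"
  have a_bound: "\<bar>ln (r t)\<bar> \<le> a" if "t \<in> S" for t
  proof -
    have "\<bar>ln (r t)\<bar> \<le> (\<Sum>t\<in>S. \<bar>ln (r t)\<bar>)" using fin that by (intro member_le_sum) auto
    then show ?thesis unfolding a_def by simp
  qed
  have a1: "a \<ge> 1" unfolding a_def by (simp add: sum_nonneg)
  then have a0: "a > 0" by simp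
  define l2 where "l2 = ln (2::real)"
  have l2: "l2 > 0" unfolding l2_def by simp
  define s where "s = min (1 / a) (\<delta> * l2 / a\<^sup>2)"
  have s0: "s > 0" unfolding s_def using a0 d l2 by simp
  have sa: "s * a \<le> 1" and sd: "s * a\<^sup>2 \<le> \<delta> * l2"
    unfolding s_def using a0 by (auto simp: field_simps min_def)
  have "s * 1 \<le> s * a" using a1 s0 by (intro mult_left_mono) auto
  with sa have s1: "s \<le> 1" by simp
  \<comment> \<open>uniformly over \<open>S\<close>, \<open>|s ln r| \<le> s a \<le> 1\<close>, so the second-order bound applies\<close>
  have expansion: "r t powr s \<le> 1 + s * ln (r t) + s\<^sup>2 * a\<^sup>2" if t: "t \<in> S" for t
  proof -
    have small: "\<bar>s * ln (r t)\<bar> \<le> s * a" using a_bound[OF t] s0 by (simp add: abs_mult)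
    then have "(s * ln (r t))\<^sup>2 \<le> (s * a)\<^sup>2" by (metis abs_ge_zero power2_abs power_mono)
    moreover have "r t powr s \<le> 1 + s * ln (r t) + (s * ln (r t))\<^sup>2"
      using small sa by (intro powr_le_second_order[OF r[OF t]]) linarith
    ultimately show ?thesis by (simp add: power_mult_distrib)
  qed
  have "(\<Sum>t\<in>S. w t * r t powr s) \<le> (\<Sum>t\<in>S. w t * (1 + s * ln (r t) + s\<^sup>2 * a\<^sup>2))"
    using w expansion by (intro sum_mono mult_left_mono) (auto simp: less_imp_le)
  also have "\<dots> = 1 + s * J + s\<^sup>2 * a\<^sup>2"
    unfolding J_def using sw
    by (simp add: algebra_simps sum.distrib sum_distrib_left sum_distrib_right[symmetric])
  also have "\<dots> \<le> exp (s * J + s\<^sup>2 * a\<^sup>2)"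
    using exp_ge_add_one_self[of "s * J + s\<^sup>2 * a\<^sup>2"] by (simp add: add.assoc)
  also have "\<dots> \<le> exp (s * (J + \<delta> * l2))"
    using sd s0 by (simp add: power2_eq_square algebra_simps mult_left_mono)
  also have "\<dots> = 2 powr (s * ((\<Sum>t\<in>S. w t * log 2 (r t)) + \<delta>))"
    unfolding J_def l2_def
    by (simp add: powr_def log_def sum_divide_distrib[symmetric] algebra_simps)
  finally show ?thesis using s0 s1 by blast
qed


subsection \<open>Single-letter quantities\<close>

definition eve_chan :: "('x \<Rightarrow> ('y \<times> 'z) pmf) \<Rightarrow> 'x \<Rightarrow> 'z pmf" where
  "eve_chan W x = map_pmf snd (W x)"

definition eve_given_U :: "('u \<times> 'x) pmf \<Rightarrow> ('x \<Rightarrow> ('y \<times> 'z) pmf) \<Rightarrow> 'u \<Rightarrow> 'z pmf" where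
  "eve_given_U pUX W u = bind_pmf (cond_X_given_U pUX u) (eve_chan W)"

text \<open>The likelihood ratio \<open>W(z|x) / Q(z|u)\<close> whose logarithm has mean \<open>I(X;Z|U)\<close>.\<close>
definition info_ratio :: "('u \<times> 'x) pmf \<Rightarrow> ('x \<Rightarrow> ('y \<times> 'z) pmf) \<Rightarrow> 'u \<times> 'x \<times> 'z \<Rightarrow> real" where
  "info_ratio pUX W t = (case t of (u, x, z) \<Rightarrow> pmf (eve_chan W x) z / pmf (eve_given_U pUX W u) z)"

text \<open>The tilted moment \<open>g\<^sub>s(u) = \<Sum>\<^sub>z Q(z|u)\<^sup>-\<^sup>s E[W(z|X)\<^sup>1\<^sup>+\<^sup>s | U = u]\<close> governing the tail term.\<close>
definition tilted_moment :: "('u \<times> 'x) pmf \<Rightarrow> ('x \<Rightarrow> ('y \<times> 'z::finite) pmf) \<Rightarrow> real \<Rightarrow> 'u \<Rightarrow> real" where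
  "tilted_moment pUX W s u = (\<Sum>z\<in>UNIV. pmf (eve_given_U pUX W u) z powr (-s)
       * measure_pmf.expectation (cond_X_given_U pUX u) (\<lambda>x. pmf (eve_chan W x) z powr (1 + s)))"

lemma tilted_moment_nonneg: "tilted_moment pUX W s u \<ge> 0"
  unfolding tilted_moment_def by (intro sum_nonneg mult_nonneg_nonneg integral_nonneg) auto

lemma pmf_fst_eq_sum:
  fixes pUX :: "('u \<times> 'x::finite) pmf"
  shows "pmf (map_pmf fst pUX) u = (\<Sum>x\<in>UNIV. pmf pUX (u, x))"
proof -
  have e: "fst -` {u} = Pair u ` UNIV" by auto
  have "pmf (map_pmf fst pUX) u = sum (pmf pUX) (Pair u ` UNIV)"
    by (simp add: pmf_map measure_measure_pmf_finite e)
  also have "\<dots> = (\<Sum>x\<in>UNIV. pmf pUX (u, x))"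
    by (subst sum.reindex) (auto simp: inj_on_def)
  finally show ?thesis .
qed

lemma pmf_le_pmf_fst:
  fixes pUX :: "('u \<times> 'x::finite) pmf"
  shows "pmf pUX (u, x) \<le> pmf (map_pmf fst pUX) u"
  unfolding pmf_fst_eq_sum by (rule member_le_sum) auto

lemma pmf_cond_X_given_U:
  fixes pUX :: "('u::finite \<times> 'x::finite) pmf"
  assumes pos: "pmf (map_pmf fst pUX) u > 0"
  shows "pmf (cond_X_given_U pUX u) x = pmf pUX (u, x) / pmf (map_pmf fst pUX) u"
proof -
  define A where "A = {p :: 'u \<times> 'x. fst p = u}"
  have "u \<in> set_pmf (map_pmf fst pUX)" using pos by (metis less_irrefl set_pmf_iff)
  then have ne: "set_pmf pUX \<inter> A \<noteq> {}" unfolding A_def by auto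
  have mA: "measure (measure_pmf pUX) A = pmf (map_pmf fst pUX) u"
    unfolding A_def by (simp add: pmf_map vimage_def)
  have "pmf (cond_X_given_U pUX u) x = measure (measure_pmf (cond_pmf pUX A)) (snd -` {x})"
    unfolding cond_X_given_U_def A_def by (simp add: pmf_map)
  also have "\<dots> = (\<Sum>p\<in>snd -` {x}. pmf (cond_pmf pUX A) p)"
    by (simp add: measure_measure_pmf_finite)
  also have "\<dots> = (\<Sum>p\<in>snd -` {x}. if p \<in> A then pmf pUX p / measure (measure_pmf pUX) A else 0)"
    by (simp add: pmf_cond[OF ne])
  also have "\<dots> = (\<Sum>p\<in>{p\<in>snd -` {x}. p \<in> A}. pmf pUX p / measure (measure_pmf pUX) A)"
    by (subst sum.inter_filter) auto
  also have "{p\<in>snd -` {x}. p \<in> A} = {(u, x)}" unfolding A_def by auto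
  finally show ?thesis using mA by simp
qed

lemma pmf_UXZ:
  fixes pUX :: "('u::finite \<times> 'x::finite) pmf" and W :: "'x \<Rightarrow> ('y::finite \<times> 'z::finite) pmf"
  shows "pmf (UXZ_pmf pUX W) (u, x, z) = pmf pUX (u, x) * pmf (eve_chan W x) z"
proof -
  have inner: "bind_pmf (W x') (\<lambda>(y, z). return_pmf (u', x', z)) = map_pmf (\<lambda>z. (u', x', z)) (eve_chan W x')" for u' x'
    unfolding eve_chan_def map_pmf_def by (simp add: bind_assoc_pmf bind_return_pmf case_prod_beta')
  have U: "UXZ_pmf pUX W = bind_pmf pUX (\<lambda>p. map_pmf (\<lambda>z. (fst p, snd p, z)) (eve_chan W (snd p)))"
    unfolding UXZ_pmf_def by (intro bind_pmf_cong refl) (auto simp: inner)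
  have m: "pmf (map_pmf (\<lambda>z. (fst p, snd p, z)) (eve_chan W (snd p))) (u, x, z)
         = (if p = (u, x) then pmf (eve_chan W x) z else 0)" for p
  proof (cases "p = (u, x)")
    case True
    have "inj (\<lambda>z. (u, x, z))" by (auto simp: inj_on_def)
    then show ?thesis using True pmf_map_inj'[OF \<open>inj (\<lambda>z. (u, x, z))\<close>, of "eve_chan W x" z] by simp
  next
    case False
    have "(\<lambda>z. (fst p, snd p, z)) -` {(u, x, z)} = {}" using False by (cases p) auto
    then show ?thesis using False by (simp add: pmf_map)
  qed
  show ?thesis unfolding U pmf_bind m expectation_finite_type
    by (simp add: if_distrib cong: if_cong)
qed

lemma pmf_eve_given_U:
  fixes pUX :: "('u \<times> 'x::finite) pmf"
  shows "pmf (eve_given_U pUX W u) z = (\<Sum>x\<in>UNIV. pmf (cond_X_given_U pUX u) x * pmf (eve_chan W x) z)"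
  unfolding eve_given_U_def pmf_bind expectation_finite_type ..

lemma eve_given_U_pos:
  fixes pUX :: "('u::finite \<times> 'x::finite) pmf"
  assumes a: "pmf pUX (u, x) > 0" and b: "pmf (eve_chan W x) z > 0"
  shows "pmf (eve_given_U pUX W u) z > 0"
proof -
  have "pmf (map_pmf fst pUX) u > 0" using a pmf_le_pmf_fst[of pUX u x] by linarith
  then have "pmf (cond_X_given_U pUX u) x * pmf (eve_chan W x) z > 0"
    using a b by (simp add: pmf_cond_X_given_U)
  moreover have "pmf (cond_X_given_U pUX u) x * pmf (eve_chan W x) z
      \<le> (\<Sum>x\<in>UNIV. pmf (cond_X_given_U pUX u) x * pmf (eve_chan W x) z)"
    by (rule member_le_sum) auto
  ultimately show ?thesis unfolding pmf_eve_given_U by linarith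
qed

lemma info_ratio_pos:
  fixes pUX :: "('u::finite \<times> 'x::finite) pmf" and W :: "'x \<Rightarrow> ('y::finite \<times> 'z::finite) pmf"
  assumes "pmf (UXZ_pmf pUX W) t > 0"
  shows "info_ratio pUX W t > 0"
proof -
  obtain u x z where tt: "t = (u, x, z)" by (cases t) auto
  have a: "pmf pUX (u, x) > 0" and b: "pmf (eve_chan W x) z > 0"
    using assms unfolding tt pmf_UXZ by (auto simp: zero_less_mult_iff)
  show ?thesis unfolding tt info_ratio_def using eve_given_U_pos[OF a b] b by simp
qed

lemma sum_UNIV_triple:
  fixes f :: "'u::finite \<times> 'x::finite \<times> 'z::finite \<Rightarrow> real"
  shows "(\<Sum>t\<in>UNIV. f t) = (\<Sum>u\<in>UNIV. \<Sum>x\<in>UNIV. \<Sum>z\<in>UNIV. f (u, x, z))"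
  by (simp add: UNIV_Times_UNIV[symmetric] sum.cartesian_product' del: UNIV_Times_UNIV)

lemma expectation_tilted_moment:
  fixes pUX :: "('u::finite \<times> 'x::finite) pmf" and W :: "'x \<Rightarrow> ('y::finite \<times> 'z::finite) pmf"
  shows "measure_pmf.expectation (map_pmf fst pUX) (tilted_moment pUX W s)
    = (\<Sum>t\<in>{t. pmf (UXZ_pmf pUX W) t > 0}. pmf (UXZ_pmf pUX W) t * info_ratio pUX W t powr s)"
proof -
  define P where "P = UXZ_pmf pUX W"
  define F where "F = (\<lambda>t. if pmf P t > 0 then pmf P t * info_ratio pUX W t powr s else 0)"
  have key: "pmf (map_pmf fst pUX) u * (pmf (eve_given_U pUX W u) z powr (-s)
               * (pmf (cond_X_given_U pUX u) x * pmf (eve_chan W x) z powr (1 + s)))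
      = F (u, x, z)" for u x z
  proof (cases "pmf pUX (u, x) > 0 \<and> pmf (eve_chan W x) z > 0")
    case True
    then have pu: "pmf (map_pmf fst pUX) u > 0" using pmf_le_pmf_fst[of pUX u x] by linarith
    have q: "pmf (eve_given_U pUX W u) z > 0" using True by (intro eve_given_U_pos) auto
    have bayes: "pmf (map_pmf fst pUX) u * pmf (cond_X_given_U pUX u) x = pmf pUX (u, x)"
      using pu by (simp add: pmf_cond_X_given_U)
    have F_val: "F (u, x, z) = pmf pUX (u, x) * pmf (eve_chan W x) z * info_ratio pUX W (u, x, z) powr s"
      using True by (simp add: F_def P_def pmf_UXZ)
    have "pmf (eve_chan W x) z powr (1 + s) = pmf (eve_chan W x) z * pmf (eve_chan W x) z powr s"
      by (simp add: powr_mult_base)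
    then show ?thesis unfolding F_val bayes[symmetric] using True q
      by (simp add: info_ratio_def powr_divide powr_minus divide_inverse mult_ac powr_mult inverse_powr)
  next
    case False
    then have "pmf pUX (u, x) = 0 \<or> pmf (eve_chan W x) z = 0" by (auto simp: less_le)
    moreover have "pmf (map_pmf fst pUX) u = 0 \<Longrightarrow> pmf pUX (u, x) = 0"
      using pmf_le_pmf_fst[of pUX u x] by (simp add: order_antisym)
    ultimately show ?thesis
      by (auto simp: F_def P_def pmf_UXZ pmf_cond_X_given_U less_le)
  qed
  have "measure_pmf.expectation (map_pmf fst pUX) (tilted_moment pUX W s)
     = (\<Sum>u\<in>UNIV. \<Sum>z\<in>UNIV. \<Sum>x\<in>UNIV. pmf (map_pmf fst pUX) u * (pmf (eve_given_U pUX W u) z powr (-s)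
           * (pmf (cond_X_given_U pUX u) x * pmf (eve_chan W x) z powr (1 + s))))"
    unfolding expectation_finite_type tilted_moment_def by (simp add: sum_distrib_left)
  also have "\<dots> = (\<Sum>u\<in>UNIV. \<Sum>x\<in>UNIV. \<Sum>z\<in>UNIV. F (u, x, z))"
    unfolding key by (intro sum.cong refl) (rule sum.swap)
  also have "\<dots> = (\<Sum>t\<in>UNIV. F t)" by (rule sum_UNIV_triple[symmetric])
  also have "\<dots> = (\<Sum>t\<in>{t. pmf P t > 0}. pmf P t * info_ratio pUX W t powr s)"
    unfolding F_def by (subst sum.inter_filter[symmetric]) auto
  finally show ?thesis unfolding P_def .
qed

lemma cond_mutual_info_UXZ:
  fixes pUX :: "('u::finite \<times> 'x::finite) pmf" and W :: "'x \<Rightarrow> ('y::finite \<times> 'z::finite) pmf"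
  shows "cond_mutual_info (UXZ_pmf pUX W)
       = (\<Sum>t\<in>{t. pmf (UXZ_pmf pUX W) t > 0}. pmf (UXZ_pmf pUX W) t * log 2 (info_ratio pUX W t))"
  unfolding cond_mutual_info_def Let_def
proof (intro sum.cong refl)
  fix t assume t: "t \<in> {t. pmf (UXZ_pmf pUX W) t > 0}"
  obtain u x z where tt: "t = (u, x, z)" by (cases t) auto
  have a: "pmf pUX (u, x) > 0" and b: "pmf (eve_chan W x) z > 0"
    using t unfolding tt by (auto simp: pmf_UXZ zero_less_mult_iff)
  have pu: "pmf (map_pmf fst pUX) u > 0" using a pmf_le_pmf_fst[of pUX u x] by linarith
  have q: "pmf (eve_given_U pUX W u) z > 0" by (rule eve_given_U_pos[OF a b])
  have W_mass: "(\<Sum>z\<in>UNIV. pmf (eve_chan W x) z) = 1" for x by (simp add: sum_pmf_eq_1)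
  have pUX_marg: "(\<Sum>z\<in>UNIV. pmf (UXZ_pmf pUX W) (u, x', z)) = pmf pUX (u, x')" for x'
    by (simp add: pmf_UXZ sum_distrib_left[symmetric] W_mass)
  have pU_marg: "(\<Sum>x\<in>UNIV. pmf pUX (u, x)) = pmf (map_pmf fst pUX) u"
    by (simp add: pmf_fst_eq_sum)
  have pUZ_marg: "(\<Sum>x\<in>UNIV. pmf (UXZ_pmf pUX W) (u, x, z)) = pmf (map_pmf fst pUX) u * pmf (eve_given_U pUX W u) z"
    using pu by (simp add: pmf_UXZ pmf_eve_given_U sum_distrib_left pmf_cond_X_given_U)
  show "(case t of (u, x, z) \<Rightarrow> pmf (UXZ_pmf pUX W) (u, x, z) * log 2 (pmf (UXZ_pmf pUX W) (u, x, z) *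
              (\<Sum>x\<in>UNIV. \<Sum>z\<in>UNIV. pmf (UXZ_pmf pUX W) (u, x, z)) /
              ((\<Sum>z\<in>UNIV. pmf (UXZ_pmf pUX W) (u, x, z)) * (\<Sum>x\<in>UNIV. pmf (UXZ_pmf pUX W) (u, x, z)))))
          = pmf (UXZ_pmf pUX W) t * log 2 (info_ratio pUX W t)"
    unfolding tt prod.case pUX_marg pUZ_marg pU_marg using a pu q
    by (simp add: pmf_UXZ info_ratio_def field_simps)
qed

lemma tilted_moment_exponent:
  fixes pUX :: "('u::finite \<times> 'x::finite) pmf" and W :: "'x \<Rightarrow> ('y::finite \<times> 'z::finite) pmf"
  assumes "\<delta> > 0"
  shows "\<exists>s>0. s \<le> 1 \<and> measure_pmf.expectation (map_pmf fst pUX) (tilted_moment pUX W s)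
                          \<le> 2 powr (s * (cond_mutual_info (UXZ_pmf pUX W) + \<delta>))"
  unfolding expectation_tilted_moment cond_mutual_info_UXZ
  by (rule weighted_powr_exponent_bound[OF _ _ _ sum_support_pmf assms]) (simp_all add: info_ratio_pos)


subsection \<open>Output laws of a fixed codebook\<close>

lemma num_idx_ge: "real (num_idx n r) \<ge> 2 powr (real n * r)"
  unfolding num_idx_def by (rule real_nat_ceiling_ge)

lemma num_idx_pos: "num_idx n r > 0"
proof -
  have "(2::real) powr (real n * r) > 0" by simp
  then show ?thesis using num_idx_ge[of n r] by linarith
qed

definition eve_output :: "('x \<Rightarrow> ('y \<times> 'z) pmf) \<Rightarrow> nat \<Rightarrow> ('u, 'x) codebook \<Rightarrow> nat \<Rightarrow> nat \<Rightarrow> nat \<Rightarrow> (nat \<Rightarrow> 'z) pmf" where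
  "eve_output W n C m0 m k = Pi_pmf {..<n} undefined (\<lambda>t. map_pmf snd (W (snd C (m0, m, k, t))))"

definition msg_output :: "('x \<Rightarrow> ('y \<times> 'z) pmf) \<Rightarrow> nat \<Rightarrow> nat \<Rightarrow> nat \<Rightarrow> ('u, 'x) codebook \<Rightarrow> nat \<Rightarrow> (nat \<Rightarrow> 'z) \<Rightarrow> real" where
  "msg_output W n N0 K C m zs = (\<Sum>m0<N0. (\<Sum>k<K. pmf (eve_output W n C m0 m k) zs) / K) / N0"

lemma pmf_Pair_bind:
  "pmf (bind_pmf M (\<lambda>zs. return_pmf (m', zs))) (m, zs) = (if m' = m then pmf M zs else 0)"
proof -
  have e: "bind_pmf M (\<lambda>zs. return_pmf (m', zs)) = map_pmf (Pair m') M" by (simp add: map_pmf_def)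
  show ?thesis
  proof (cases "m' = m")
    case True
    have "inj (Pair m')" by (auto simp: inj_on_def)
    then show ?thesis unfolding e using True pmf_map_inj'[OF \<open>inj (Pair m')\<close>, of M zs] by simp
  next
    case False
    then have "Pair m' -` {(m, zs)} = {}" by auto
    then show ?thesis unfolding e using False by (simp add: pmf_map)
  qed
qed

lemma pmf_MZ:
  "pmf (MZ_pmf W n R0 R Rr C) (m, zs)
     = (if m < num_idx n R then msg_output W n (num_idx n R0) (num_idx n Rr) C m zs / num_idx n R else 0)"
proof -
  have n0: "{..<num_idx n R0} \<noteq> {}" "{..<num_idx n R} \<noteq> {}" "{..<num_idx n Rr} \<noteq> {}"
    using num_idx_pos by auto
  have "pmf (MZ_pmf W n R0 R Rr C) (m, zs)
      = (\<Sum>m0<num_idx n R0. (\<Sum>m'<num_idx n R. (\<Sum>k<num_idx n Rr.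
           (if m' = m then pmf (eve_output W n C m0 m' k) zs else 0)) / num_idx n Rr) / num_idx n R) / num_idx n R0"
    unfolding MZ_pmf_def eve_output_def[symmetric] using n0 by (simp add: pmf_bind_pmf_of_set pmf_Pair_bind)
  also have "\<dots> = (\<Sum>m0<num_idx n R0. (\<Sum>m'<num_idx n R. (if m' = m then (\<Sum>k<num_idx n Rr.
           pmf (eve_output W n C m0 m' k) zs) / num_idx n Rr else 0)) / num_idx n R) / num_idx n R0"
    by (intro arg_cong2[where f="(/)"] sum.cong refl) auto
  also have "\<dots> = (if m < num_idx n R then msg_output W n (num_idx n R0) (num_idx n Rr) C m zs / num_idx n R else 0)"
    unfolding msg_output_def by (simp add: sum.delta' sum_divide_distrib mult_ac)
  finally show ?thesis .
qed

lemma map_fst_MZ: "map_pmf fst (MZ_pmf W n R0 R Rr C) = pmf_of_set {..<num_idx n R}"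
  unfolding MZ_pmf_def by (simp add: map_bind_pmf bind_return_pmf')

lemma pmf_snd_MZ:
  "pmf (map_pmf snd (MZ_pmf W n R0 R Rr C)) zs
     = (\<Sum>m<num_idx n R. msg_output W n (num_idx n R0) (num_idx n Rr) C m zs) / num_idx n R"
proof -
  have n0: "{..<num_idx n R0} \<noteq> {}" "{..<num_idx n R} \<noteq> {}" "{..<num_idx n Rr} \<noteq> {}"
    using num_idx_pos by auto
  have e: "map_pmf snd (MZ_pmf W n R0 R Rr C) = bind_pmf (pmf_of_set {..<num_idx n R0}) (\<lambda>m0.
      bind_pmf (pmf_of_set {..<num_idx n R}) (\<lambda>m. bind_pmf (pmf_of_set {..<num_idx n Rr}) (\<lambda>k. eve_output W n C m0 m k)))"
    unfolding MZ_pmf_def eve_output_def[symmetric] by (simp add: map_bind_pmf bind_return_pmf')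
  show ?thesis unfolding e msg_output_def using n0
    by (simp add: pmf_bind_pmf_of_set sum_divide_distrib[symmetric] sum.swap[of _ "{..<num_idx n R0}"])
qed

lemma msg_output_outside:
  assumes "zs \<notin> PiE {..<n} (\<lambda>_. UNIV)"
  shows "msg_output W n N0 K C m zs = 0"
  unfolding msg_output_def eve_output_def using assms by (simp add: pmf_Pi_lessThan_outside)


subsection \<open>From leakage to per-message soft covering\<close>

lemma sum_abs_dev_mean_le:
  fixes a :: "nat \<Rightarrow> real" and N :: nat
  assumes N: "N > 0"
  shows "(\<Sum>m<N. \<bar>a m - (\<Sum>m'<N. a m') / N\<bar>) \<le> 2 * (\<Sum>m<N. \<bar>a m - b\<bar>)"
proof -
  define D where "D = (\<Sum>m<N. \<bar>a m - b\<bar>)"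
  have "(\<Sum>m'<N. a m') / N - b = (\<Sum>m'<N. a m' - b) / N"
    using N by (simp add: sum_subtractf diff_divide_distrib)
  then have mean_dev: "\<bar>(\<Sum>m'<N. a m') / N - b\<bar> \<le> D / N"
    using N by (simp add: D_def abs_divide divide_right_mono sum_abs)
  have "(\<Sum>m<N. \<bar>a m - (\<Sum>m'<N. a m') / N\<bar>) \<le> (\<Sum>m<N. \<bar>a m - b\<bar> + D / N)"
    using mean_dev by (intro sum_mono) linarith
  also have "\<dots> = 2 * D" using N by (simp add: D_def sum.distrib)
  finally show ?thesis unfolding D_def .
qed

lemma leakage_eq_msg_output_deviation:
  fixes W :: "'x \<Rightarrow> ('y \<times> 'z::finite) pmf" and C :: "('u, 'x) codebook"
  shows "var_dist (MZ_pmf W n R0 R Rr C)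
           (pair_pmf (map_pmf fst (MZ_pmf W n R0 R Rr C)) (map_pmf snd (MZ_pmf W n R0 R Rr C)))
     = (\<Sum>zs\<in>PiE {..<n} (\<lambda>_. UNIV). \<Sum>m<num_idx n R.
          \<bar>msg_output W n (num_idx n R0) (num_idx n Rr) C m zs
           - (\<Sum>m'<num_idx n R. msg_output W n (num_idx n R0) (num_idx n Rr) C m' zs) / num_idx n R\<bar>)
       / num_idx n R"
proof -
  define N where "N = num_idx n R"
  define \<Omega> where "\<Omega> = PiE {..<n} (\<lambda>_. UNIV :: 'z set)"
  define A where "A = msg_output W n (num_idx n R0) (num_idx n Rr) C"
  define M where "M = MZ_pmf W n R0 R Rr C"
  define P where "P = pair_pmf (map_pmf fst M) (map_pmf snd M)"
  have finO: "finite \<Omega>" unfolding \<Omega>_def by (simp add: finite_PiE)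
  have pM: "pmf M (m, zs) = (if m < N then A m zs / N else 0)" for m zs
    unfolding M_def N_def A_def by (rule pmf_MZ)
  have pP: "pmf P (m, zs) = indicator {..<N} m / N * ((\<Sum>m'<N. A m' zs) / N)" for m zs
    using num_idx_pos[of n R] unfolding P_def M_def N_def A_def
    by (simp add: pmf_pair map_fst_MZ pmf_snd_MZ lessThan_empty_iff)
  have summand: "\<bar>pmf M (m, zs) - pmf P (m, zs)\<bar> = \<bar>A m zs - (\<Sum>m'<N. A m' zs) / N\<bar> / N"
    if "m < N" for m zs
  proof -
    have joint: "pmf M (m, zs) = A m zs / N" using that pM[of m zs] by simp
    have product: "pmf P (m, zs) = ((\<Sum>m'<N. A m' zs) / N) / N" using that pP[of m zs] by simp
    have "pmf M (m, zs) - pmf P (m, zs) = (A m zs - (\<Sum>m'<N. A m' zs) / N) / N"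
      unfolding joint product by (rule diff_divide_distrib[symmetric])
    then show ?thesis by (simp add: abs_divide)
  qed
  have "var_dist M P = (\<Sum>a\<in>{..<N} \<times> \<Omega>. \<bar>pmf M a - pmf P a\<bar>)"
  proof (rule var_dist_finite)
    fix a assume a: "a \<notin> {..<N} \<times> \<Omega>"
    obtain m zs where mz: "a = (m, zs)" by (cases a) auto
    have "zs \<notin> \<Omega> \<Longrightarrow> A m' zs = 0" for m' unfolding \<Omega>_def A_def by (rule msg_output_outside)
    then show "pmf M a = 0" "pmf P a = 0" unfolding mz pM pP using a mz by auto
  qed (use finO in simp)
  also have "\<dots> = (\<Sum>m<N. \<Sum>zs\<in>\<Omega>. \<bar>A m zs - (\<Sum>m'<N. A m' zs) / N\<bar> / N)"
    unfolding sum.cartesian_product' by (intro sum.cong refl) (simp add: summand)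
  also have "\<dots> = (\<Sum>zs\<in>\<Omega>. \<Sum>m<N. \<bar>A m zs - (\<Sum>m'<N. A m' zs) / N\<bar>) / N"
    by (subst sum.swap) (simp add: sum_divide_distrib)
  finally show ?thesis unfolding M_def P_def N_def \<Omega>_def A_def .
qed

text \<open>The mean \<open>p(z\<^sup>n)\<close> is compared with the reference mixture
  \<open>B = avg\<^sub>m\<^sub>0 Q m0\<close> via the centring lemma above.\<close>
lemma leakage_le_soft_covering_error:
  fixes W :: "'x \<Rightarrow> ('y \<times> 'z::finite) pmf" and C :: "('u, 'x) codebook" and Q :: "nat \<Rightarrow> (nat \<Rightarrow> 'z) \<Rightarrow> real"
  shows "var_dist (MZ_pmf W n R0 R Rr C)
           (pair_pmf (map_pmf fst (MZ_pmf W n R0 R Rr C)) (map_pmf snd (MZ_pmf W n R0 R Rr C)))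
     \<le> 2 / (num_idx n R * num_idx n R0) * (\<Sum>m<num_idx n R. \<Sum>m0<num_idx n R0.
           \<Sum>zs\<in>PiE {..<n} (\<lambda>_. UNIV). \<bar>(\<Sum>k<num_idx n Rr. pmf (eve_output W n C m0 m k) zs) / num_idx n Rr - Q m0 zs\<bar>)"
proof -
  define N where "N = num_idx n R"
  define N0 where "N0 = num_idx n R0"
  define K where "K = num_idx n Rr"
  define \<Omega> where "\<Omega> = PiE {..<n} (\<lambda>_. UNIV :: 'z set)"
  define A where "A = msg_output W n N0 K C"
  define X where "X = (\<lambda>m0 m zs. (\<Sum>k<K. pmf (eve_output W n C m0 m k) zs) / K)"
  define B where "B = (\<lambda>zs. (\<Sum>m0<N0. Q m0 zs) / N0)"
  have N: "N > 0" and N0: "N0 > 0" unfolding N_def N0_def by (auto intro: num_idx_pos)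
  have AB: "\<bar>A m zs - B zs\<bar> \<le> (\<Sum>m0<N0. \<bar>X m0 m zs - Q m0 zs\<bar>) / N0" for m zs
  proof -
    have "A m zs - B zs = (\<Sum>m0<N0. X m0 m zs - Q m0 zs) / N0"
      unfolding A_def B_def X_def msg_output_def by (simp add: sum_subtractf diff_divide_distrib)
    then show ?thesis using N0 by (simp add: abs_divide divide_right_mono sum_abs)
  qed
  have "var_dist (MZ_pmf W n R0 R Rr C)
           (pair_pmf (map_pmf fst (MZ_pmf W n R0 R Rr C)) (map_pmf snd (MZ_pmf W n R0 R Rr C)))
      = (\<Sum>zs\<in>\<Omega>. \<Sum>m<N. \<bar>A m zs - (\<Sum>m'<N. A m' zs) / N\<bar>) / N"
    unfolding N_def \<Omega>_def A_def N0_def K_def by (rule leakage_eq_msg_output_deviation)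
  also have "\<dots> \<le> (\<Sum>zs\<in>\<Omega>. 2 * (\<Sum>m<N. (\<Sum>m0<N0. \<bar>X m0 m zs - Q m0 zs\<bar>) / N0)) / N"
  proof (rule divide_right_mono[OF sum_mono])
    fix zs
    have "(\<Sum>m<N. \<bar>A m zs - (\<Sum>m'<N. A m' zs) / N\<bar>) \<le> 2 * (\<Sum>m<N. \<bar>A m zs - B zs\<bar>)"
      by (rule sum_abs_dev_mean_le[OF N])
    also have "\<dots> \<le> 2 * (\<Sum>m<N. (\<Sum>m0<N0. \<bar>X m0 m zs - Q m0 zs\<bar>) / N0)"
      using AB by (intro mult_left_mono sum_mono) auto
    finally show "(\<Sum>m<N. \<bar>A m zs - (\<Sum>m'<N. A m' zs) / N\<bar>)
        \<le> 2 * (\<Sum>m<N. (\<Sum>m0<N0. \<bar>X m0 m zs - Q m0 zs\<bar>) / N0)" .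
  qed simp
  also have "\<dots> = 2 / (N * N0) * (\<Sum>m<N. \<Sum>m0<N0. \<Sum>zs\<in>\<Omega>. \<bar>X m0 m zs - Q m0 zs\<bar>)"
    by (simp add: sum_distrib_left sum_divide_distrib[symmetric] sum.swap[of _ \<Omega>] mult_ac)
  finally show ?thesis unfolding N_def N0_def K_def \<Omega>_def X_def .
qed


subsection \<open>Averaging over the random codebook\<close>

lemma codebook_pmf_split:
  "codebook_pmf pUX n R0 R Rr
     = bind_pmf (Pi_pmf ({..<num_idx n R0} \<times> {..<n}) undefined (\<lambda>_. map_pmf fst pUX))
         (\<lambda>cu. map_pmf (Pair cu)
            (Pi_pmf ({..<num_idx n R0} \<times> {..<num_idx n R} \<times> {..<num_idx n Rr} \<times> {..<n}) undefined
               (\<lambda>(i, j, k, t). cond_X_given_U pUX (cu (i, t)))))"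
  unfolding codebook_pmf_def map_pmf_def ..

lemma finite_set_codebook_pmf:
  fixes pUX :: "('u::finite \<times> 'x::finite) pmf"
  shows "finite (set_pmf (codebook_pmf pUX n R0 R Rr))"
  unfolding codebook_pmf_split set_bind_pmf set_map_pmf
  by (intro finite_UN_I finite_imageI finite_set_Pi_pmf) auto

lemma satellite_rows_Pi_pmf:
  fixes F :: "nat \<times> nat \<times> nat \<times> nat \<Rightarrow> 'x pmf"
  assumes "m0 < N0" "m < N"
  shows "map_pmf (\<lambda>cx k t. cx (m0, m, k, t)) (Pi_pmf ({..<N0} \<times> {..<N} \<times> {..<K} \<times> {..<n}) d F)
       = Pi_pmf {..<K} (\<lambda>_. d) (\<lambda>k. Pi_pmf {..<n} d (\<lambda>t. F (m0, m, k, t)))"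
proof -
  define g where "g = (\<lambda>p :: nat \<times> nat. (m0, m, fst p, snd p))"
  have inj: "inj g" unfolding g_def by (auto simp: inj_on_def)
  have gA: "g b \<in> {..<N0} \<times> {..<N} \<times> {..<K} \<times> {..<n} \<longleftrightarrow> b \<in> {..<K} \<times> {..<n}" for b
    using assms unfolding g_def by (cases b) auto
  have e: "(\<lambda>cx k t. cx (m0, m, k, t)) = (\<lambda>x k t. x (k, t)) \<circ> (\<lambda>cx. cx \<circ> g)"
    unfolding g_def by (auto simp: fun_eq_iff)
  have "map_pmf (\<lambda>cx k t. cx (m0, m, k, t)) (Pi_pmf ({..<N0} \<times> {..<N} \<times> {..<K} \<times> {..<n}) d F)
      = map_pmf (\<lambda>x k t. x (k, t)) (Pi_pmf ({..<K} \<times> {..<n}) d (F \<circ> g))"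
    unfolding e pmf.map_comp[symmetric] by (subst Pi_pmf_reindex[OF _ _ inj gA]) auto
  also have "\<dots> = Pi_pmf {..<K} (\<lambda>_. d) (\<lambda>k. Pi_pmf {..<n} d (\<lambda>t. (F \<circ> g) (k, t)))"
    by (rule Pi_pmf_curry) auto
  finally show ?thesis unfolding g_def by (simp add: o_def)
qed

lemma prod_rectangle_row:
  fixes g :: "'a \<Rightarrow> real" and N0 n :: nat
  assumes "m0 < N0"
  shows "(\<Prod>p\<in>{..<N0} \<times> {..<n}. (if fst p = m0 then g else (\<lambda>_. 1)) (cu p)) = (\<Prod>t<n. g (cu (m0, t)))"
proof -
  have "(\<Prod>p\<in>{..<N0} \<times> {..<n}. (if fst p = m0 then g else (\<lambda>_. 1)) (cu p))
      = (\<Prod>i<N0. \<Prod>t<n. (if i = m0 then g else (\<lambda>_. 1)) (cu (i, t)))"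
    by (subst prod.cartesian_product') simp
  also have "\<dots> = (\<Prod>i<N0. if i = m0 then (\<Prod>t<n. g (cu (i, t))) else 1)"
    by (intro prod.cong refl) auto
  finally show ?thesis using assms by (simp add: prod.delta')
qed

lemma expectation_Pi_pmf_row:
  fixes g :: "'u::finite \<Rightarrow> real" and N0 n :: nat and pU :: "'u pmf"
  assumes "m0 < N0" "\<And>u. g u \<ge> 0"
  shows "measure_pmf.expectation (Pi_pmf ({..<N0} \<times> {..<n}) d (\<lambda>_. pU)) (\<lambda>cu. \<Prod>t<n. g (cu (m0, t)))
       = (measure_pmf.expectation pU g) ^ n"
proof -
  define G where "G = (\<lambda>p :: nat \<times> nat. if fst p = m0 then g else (\<lambda>_. 1))"
  note row = prod_rectangle_row[OF assms(1)]
  have "measure_pmf.expectation (Pi_pmf ({..<N0} \<times> {..<n}) d (\<lambda>_. pU)) (\<lambda>cu. \<Prod>t<n. g (cu (m0, t)))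
      = measure_pmf.expectation (Pi_pmf ({..<N0} \<times> {..<n}) d (\<lambda>_. pU)) (\<lambda>cu. \<Prod>p\<in>{..<N0} \<times> {..<n}. G p (cu p))"
    unfolding G_def row ..
  also have "\<dots> = (\<Prod>p\<in>{..<N0} \<times> {..<n}. measure_pmf.expectation pU (G p))"
    by (rule expectation_prod_Pi_pmf) (auto simp: integrable_measure_pmf_finite G_def assms(2))
  also have "\<dots> = (\<Prod>p\<in>{..<N0} \<times> {..<n}.
                       (if fst p = m0 then (\<lambda>_. measure_pmf.expectation pU g) else (\<lambda>_. 1)) p)"
    by (intro prod.cong refl) (simp add: G_def)
  also have "\<dots> = (\<Prod>t<n. measure_pmf.expectation pU g)"
    using row[of "\<lambda>_. measure_pmf.expectation pU g" "\<lambda>p. p"] by simp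
  finally show ?thesis by simp
qed

text \<open>Per-message soft covering, averaged over the codebook: conditionally on the cloud
  centre the satellites are i.i.d., and the tilted moment single-letterises.\<close>
lemma expected_soft_covering_error:
  fixes pUX :: "('u::finite \<times> 'x::finite) pmf" and W :: "'x \<Rightarrow> ('y::finite \<times> 'z::finite) pmf"
  assumes m0: "m0 < num_idx n R0" and m: "m < num_idx n R" and T: "T > 0" and s: "s \<ge> 0"
  shows "measure_pmf.expectation (codebook_pmf pUX n R0 R Rr)
     (\<lambda>C. \<Sum>zs\<in>PiE {..<n} (\<lambda>_. UNIV). \<bar>(\<Sum>k<num_idx n Rr. pmf (eve_output W n C m0 m k) zs) / num_idx n Rr
          - pmf (Pi_pmf {..<n} undefined (\<lambda>t. eve_given_U pUX W (fst C (m0, t)))) zs\<bar>)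
   \<le> sqrt (T / num_idx n Rr) + 2 * T powr (-s) * (measure_pmf.expectation (map_pmf fst pUX) (tilted_moment pUX W s)) ^ n"
proof -
  define K where "K = num_idx n Rr"
  have K0: "K > 0" unfolding K_def by (rule num_idx_pos)
  define CU where "CU = Pi_pmf ({..<num_idx n R0} \<times> {..<n}) undefined (\<lambda>_. map_pmf fst pUX)"
  define CX where "CX = (\<lambda>cu. Pi_pmf ({..<num_idx n R0} \<times> {..<num_idx n R} \<times> {..<K} \<times> {..<n}) undefined
                                (\<lambda>(i, j, k, t). cond_X_given_U pUX (cu (i, t))))"
  define f where "f = (\<lambda>C. \<Sum>zs\<in>PiE {..<n} (\<lambda>_. UNIV). \<bar>(\<Sum>k<K. pmf (eve_output W n C m0 m k) zs) / K
          - pmf (Pi_pmf {..<n} undefined (\<lambda>t. eve_given_U pUX W (fst C (m0, t)))) zs\<bar>)"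
  define h where "h = (\<lambda>cu. sqrt (T / K) + 2 * T powr (-s) * (\<Prod>t<n. tilted_moment pUX W s (cu (m0, t))))"
  have finCU: "finite (set_pmf CU)" unfolding CU_def by (rule finite_set_Pi_pmf) auto
  have finCX: "finite (set_pmf (CX cu))" for cu unfolding CX_def by (rule finite_set_Pi_pmf) auto
  have given_centres: "measure_pmf.expectation (CX cu) (\<lambda>cx. f (cu, cx)) \<le> h cu" for cu
  proof -
    define \<mu> where "\<mu> = (\<lambda>t. cond_X_given_U pUX (cu (m0, t)))"
    have rows: "map_pmf (\<lambda>cx k t. cx (m0, m, k, t)) (CX cu)
        = Pi_pmf {..<K} (\<lambda>_. undefined) (\<lambda>k. Pi_pmf {..<n} undefined \<mu>)"
      using satellite_rows_Pi_pmf[OF m0 m, where F="\<lambda>(i, j, k, t). cond_X_given_U pUX (cu (i, t))"]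
      by (simp add: CX_def \<mu>_def)
    have "measure_pmf.expectation (CX cu) (\<lambda>cx. f (cu, cx))
        = measure_pmf.expectation (map_pmf (\<lambda>cx k t. cx (m0, m, k, t)) (CX cu))
            (\<lambda>x. \<Sum>zs\<in>PiE {..<n} (\<lambda>_. UNIV).
                \<bar>(\<Sum>k<K. pmf (Pi_pmf {..<n} undefined (\<lambda>t. eve_chan W (x k t))) zs) / K
                 - pmf (Pi_pmf {..<n} undefined (\<lambda>t. bind_pmf (\<mu> t) (eve_chan W))) zs\<bar>)"
      by (simp add: f_def eve_output_def eve_chan_def eve_given_U_def \<mu>_def)
    also have "\<dots> \<le> h cu"
      unfolding rows h_def tilted_moment_def eve_given_U_def \<mu>_def
      by (rule soft_covering_product[OF K0 T s])
    finally show ?thesis .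
  qed
  have split: "codebook_pmf pUX n R0 R Rr = bind_pmf CU (\<lambda>cu. map_pmf (Pair cu) (CX cu))"
    unfolding codebook_pmf_split CU_def CX_def K_def ..
  have "measure_pmf.expectation (codebook_pmf pUX n R0 R Rr) f \<le> measure_pmf.expectation CU h"
    unfolding split by (rule expectation_bind_pmf_le[OF finCU]) (auto simp: finCX given_centres)
  also have "measure_pmf.expectation CU h
      = sqrt (T / K) + 2 * T powr (-s) * measure_pmf.expectation CU (\<lambda>cu. \<Prod>t<n. tilted_moment pUX W s (cu (m0, t)))"
    unfolding h_def by (simp add: integrable_measure_pmf_finite finCU)
  also have "measure_pmf.expectation CU (\<lambda>cu. \<Prod>t<n. tilted_moment pUX W s (cu (m0, t)))
      = (measure_pmf.expectation (map_pmf fst pUX) (tilted_moment pUX W s)) ^ n"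
    unfolding CU_def by (rule expectation_Pi_pmf_row) (auto simp: m0 tilted_moment_nonneg)
  finally show ?thesis unfolding f_def K_def .
qed

lemma expected_leakage_bound:
  fixes pUX :: "('u::finite \<times> 'x::finite) pmf" and W :: "'x \<Rightarrow> ('y::finite \<times> 'z::finite) pmf"
  assumes T: "T > 0" and s: "s \<ge> 0"
  shows "measure_pmf.expectation (codebook_pmf pUX n R0 R Rr)
             (\<lambda>C. var_dist (MZ_pmf W n R0 R Rr C)
                     (pair_pmf (map_pmf fst (MZ_pmf W n R0 R Rr C)) (map_pmf snd (MZ_pmf W n R0 R Rr C))))
     \<le> 2 * (sqrt (T / num_idx n Rr) + 2 * T powr (-s) * (measure_pmf.expectation (map_pmf fst pUX) (tilted_moment pUX W s)) ^ n)"
proof -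
  define N where "N = num_idx n R"
  define N0 where "N0 = num_idx n R0"
  define Bd where "Bd = sqrt (T / num_idx n Rr) + 2 * T powr (-s) * (measure_pmf.expectation (map_pmf fst pUX) (tilted_moment pUX W s)) ^ n"
  define CB where "CB = codebook_pmf pUX n R0 R Rr"
  have fin: "finite (set_pmf CB)" unfolding CB_def by (rule finite_set_codebook_pmf)
  define f where "f = (\<lambda>m0 m C. \<Sum>zs\<in>PiE {..<n} (\<lambda>_. UNIV). \<bar>(\<Sum>k<num_idx n Rr. pmf (eve_output W n C m0 m k) zs) / num_idx n Rr
          - pmf (Pi_pmf {..<n} undefined (\<lambda>t. eve_given_U pUX W (fst C (m0, t)))) zs\<bar>)"
  have Np: "real N > 0" "real N0 > 0" unfolding N_def N0_def by (auto intro: num_idx_pos)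
  have "measure_pmf.expectation CB
             (\<lambda>C. var_dist (MZ_pmf W n R0 R Rr C)
                     (pair_pmf (map_pmf fst (MZ_pmf W n R0 R Rr C)) (map_pmf snd (MZ_pmf W n R0 R Rr C))))
      \<le> measure_pmf.expectation CB (\<lambda>C. 2 / (N * N0) * (\<Sum>m<N. \<Sum>m0<N0. f m0 m C))"
  proof (rule integral_mono)
    fix C :: "('u, 'x) codebook"
    show "var_dist (MZ_pmf W n R0 R Rr C)
                     (pair_pmf (map_pmf fst (MZ_pmf W n R0 R Rr C)) (map_pmf snd (MZ_pmf W n R0 R Rr C)))
        \<le> 2 / (N * N0) * (\<Sum>m<N. \<Sum>m0<N0. f m0 m C)"
      unfolding f_def N_def N0_def
      by (rule leakage_le_soft_covering_error[where Q="\<lambda>m0 zs. pmf (Pi_pmf {..<n} undefined (\<lambda>t. eve_given_U pUX W (fst C (m0, t)))) zs"])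
  qed (auto simp: integrable_measure_pmf_finite fin)
  also have "\<dots> = 2 / (N * N0) * (\<Sum>m<N. \<Sum>m0<N0. measure_pmf.expectation CB (f m0 m))"
    by (simp add: integrable_measure_pmf_finite fin)
  also have "\<dots> \<le> 2 / (N * N0) * (\<Sum>m<N. \<Sum>m0<N0. Bd)"
    unfolding CB_def f_def Bd_def N_def N0_def
    by (intro mult_left_mono sum_mono expected_soft_covering_error[OF _ _ T s]) auto
  also have "\<dots> = 2 * Bd" using Np by simp
  finally show ?thesis unfolding CB_def Bd_def .
qed


lemma leakage_bound_exponent:
  fixes I \<delta> s \<phi> Rr Kr :: real and n :: nat
  assumes d: "\<delta> > 0" and s0: "s > 0" and s1: "s \<le> 1" and phi0: "\<phi> \<ge> 0"
    and phi: "\<phi> \<le> 2 powr (s * (I + \<delta>))" and Rr: "Rr = I + 3 * \<delta>"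
    and K: "Kr \<ge> 2 powr (real n * Rr)"
  shows "2 * (sqrt (2 powr (real n * (I + 2 * \<delta>)) / Kr) + 2 * (2 powr (real n * (I + 2 * \<delta>))) powr (-s) * \<phi> ^ n)
       \<le> 6 * 2 powr (- real n * (s * \<delta> / 2))"
proof -
  define T where "T = 2 powr (real n * (I + 2 * \<delta>))"
  have Kp: "Kr > 0" using K powr_gt_zero[of 2 "real n * Rr"] by linarith
  have "T / Kr \<le> T / 2 powr (real n * Rr)"
    using K Kp unfolding T_def by (intro divide_left_mono) auto
  also have "\<dots> = 2 powr (- real n * \<delta>)"
    unfolding T_def Rr by (simp add: powr_diff[symmetric] algebra_simps)
  finally have "sqrt (T / Kr) \<le> sqrt (2 powr (- real n * \<delta>))" by simp
  also have "\<dots> = 2 powr ((- real n * \<delta>) / 2)" by (rule powr_half_sqrt_powr[symmetric]) simp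
  also have "\<dots> \<le> 2 powr (- real n * (s * \<delta> / 2))"
    using s1 d by (simp add: mult_left_mono)
  finally have covering_term: "sqrt (T / Kr) \<le> 2 powr (- real n * (s * \<delta> / 2))" .
  have "T powr (-s) * \<phi> ^ n \<le> T powr (-s) * (2 powr (s * (I + \<delta>))) ^ n"
    using phi phi0 by (intro mult_left_mono power_mono) auto
  also have "\<dots> = 2 powr (- real n * (s * \<delta>))"
    unfolding T_def by (simp add: powr_powr powr_power powr_add[symmetric] algebra_simps)
  also have "\<dots> \<le> 2 powr (- real n * (s * \<delta> / 2))"
    using s0 d by (simp add: mult_left_mono)
  finally have tail_term: "T powr (-s) * \<phi> ^ n \<le> 2 powr (- real n * (s * \<delta> / 2))" .
  show ?thesis using covering_term tail_term unfolding T_def by (simp add: mult.assoc)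
qed

lemma eventually_absorb_constant:
  fixes c \<beta> :: real
  assumes "\<beta> > 0"
  shows "\<forall>\<^sub>F n in sequentially. c * 2 powr (- (2 * \<beta>) * real n) \<le> 2 powr (- \<beta> * real n)"
proof -
  have pow: "(2::real) powr (- \<beta> * real n) = (2 powr (- \<beta>)) ^ n" for n
    by (simp add: powr_realpow[symmetric] powr_powr)
  have "(\<lambda>n. c * (2 powr (- \<beta>)) ^ n) \<longlonglongrightarrow> c * 0"
    using assms by (intro tendsto_mult tendsto_const LIMSEQ_power_zero) (auto intro: powr_less_one)
  then have "\<forall>\<^sub>F n in sequentially. c * 2 powr (- \<beta> * real n) < 1"
    unfolding pow by (intro order_tendstoD) auto
  then show ?thesis
  proof eventually_elim
    case (elim n)
    have "c * 2 powr (- (2 * \<beta>) * real n) = (c * 2 powr (- \<beta> * real n)) * 2 powr (- \<beta> * real n)"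
      by (simp add: powr_add[symmetric] algebra_simps)
    also have "\<dots> \<le> 1 * 2 powr (- \<beta> * real n)"
      using elim by (intro mult_right_mono) auto
    finally show ?case by simp
  qed
qed

lemma expected_leakage_decay:
  fixes pUX :: "('u::finite \<times> 'x::finite) pmf" and W :: "'x \<Rightarrow> ('y::finite \<times> 'z::finite) pmf"
  assumes d: "\<delta> > 0" and s0: "s > 0" and s1: "s \<le> 1"
    and phi: "measure_pmf.expectation (map_pmf fst pUX) (tilted_moment pUX W s) \<le> 2 powr (s * (I + \<delta>))"
    and Rr: "Rr = I + 3 * \<delta>"
  shows "measure_pmf.expectation (codebook_pmf pUX n R0 R Rr)
             (\<lambda>C. var_dist (MZ_pmf W n R0 R Rr C)
                     (pair_pmf (map_pmf fst (MZ_pmf W n R0 R Rr C)) (map_pmf snd (MZ_pmf W n R0 R Rr C))))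
         \<le> 6 * 2 powr (- (s * \<delta> / 2) * real n)"
proof -
  define T where "T = 2 powr (real n * (I + 2 * \<delta>))"
  have phi0: "measure_pmf.expectation (map_pmf fst pUX) (tilted_moment pUX W s) \<ge> 0"
    using tilted_moment_nonneg[of pUX W s] by simp
  have "measure_pmf.expectation (codebook_pmf pUX n R0 R Rr)
             (\<lambda>C. var_dist (MZ_pmf W n R0 R Rr C)
                     (pair_pmf (map_pmf fst (MZ_pmf W n R0 R Rr C)) (map_pmf snd (MZ_pmf W n R0 R Rr C))))
      \<le> 2 * (sqrt (T / num_idx n Rr)
               + 2 * T powr (-s) * (measure_pmf.expectation (map_pmf fst pUX) (tilted_moment pUX W s)) ^ n)"
    using s0 by (intro expected_leakage_bound) (simp_all add: T_def)
  also have "\<dots> \<le> 6 * 2 powr (- real n * (s * \<delta> / 2))"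
    unfolding T_def by (rule leakage_bound_exponent[OF d s0 s1 phi0 phi Rr num_idx_ge])
  finally show ?thesis by (simp add: mult.commute)
qed


theorem lemma2:
  fixes pUX :: "('u::finite \<times> 'x::finite) pmf"
    and W :: "'x \<Rightarrow> ('y::finite \<times> 'z::finite) pmf"
    and R0 R Rr :: real
  assumes "R0 > 0" and "R > 0" and "Rr > 0"
    and "Rr > cond_mutual_info (UXZ_pmf pUX W)"
  shows "\<exists>\<beta>>0. \<forall>\<^sub>F n in sequentially.
           measure_pmf.expectation (codebook_pmf pUX n R0 R Rr)
             (\<lambda>C. var_dist (MZ_pmf W n R0 R Rr C)
                     (pair_pmf (map_pmf fst (MZ_pmf W n R0 R Rr C)) (map_pmf snd (MZ_pmf W n R0 R Rr C))))
           \<le> 2 powr (- \<beta> * real n)"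
proof -
  define I where "I = cond_mutual_info (UXZ_pmf pUX W)"
  define \<delta> where "\<delta> = (Rr - I) / 3"
  have d: "\<delta> > 0" using assms(4) unfolding \<delta>_def I_def by simp
  have Rr: "Rr = I + 3 * \<delta>" unfolding \<delta>_def by (simp add: field_simps)
  obtain s where s0: "s > 0" and s1: "s \<le> 1"
    and phi: "measure_pmf.expectation (map_pmf fst pUX) (tilted_moment pUX W s) \<le> 2 powr (s * (I + \<delta>))"
    using tilted_moment_exponent[OF d, of pUX W] unfolding I_def by blast
  define \<beta> where "\<beta> = s * \<delta> / 4"
  have "\<beta> > 0" unfolding \<beta>_def using s0 d by simp
  moreover have "\<forall>\<^sub>F n in sequentially.
           measure_pmf.expectation (codebook_pmf pUX n R0 R Rr)
             (\<lambda>C. var_dist (MZ_pmf W n R0 R Rr C)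
                     (pair_pmf (map_pmf fst (MZ_pmf W n R0 R Rr C)) (map_pmf snd (MZ_pmf W n R0 R Rr C))))
           \<le> 2 powr (- \<beta> * real n)"
    using eventually_absorb_constant[OF \<open>\<beta> > 0\<close>, of 6]
  proof eventually_elim
    case (elim n)
    have rate: "- (s * \<delta> / 2) * real n = - (2 * \<beta>) * real n" unfolding \<beta>_def by simp
    show ?case using expected_leakage_decay[OF d s0 s1 phi Rr, of n R0 R] elim unfolding rate by linarith
  qed
  ultimately show ?thesis by blast
qed

end
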